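(* Let $P$, $\mu$ and $\nu$ be as follows: $P$ irreducible semi-isotropic on $\mathbb T=\mathbb T_q$, $\mu$ the associated measure on $\Gamma$, $\nu$ a $\mu$-invariant Radon measure on $\partial^*\mathbb T$. Set $\mu_{k,r}=\sum_{x\in T_{k,r}}p(o,x)$ and $a_j=\nu(\Omega_j)$, $j\ge0$. Then $\nu$ is determined by the numbers $(a_j)_{j\ge0}$, and these satisfy $$a_0=\sum_{k=1}^\infty\sum_{r=1}^\infty\frac{a_r}{(q-1)q^{k-1}}\mu_{k,r}+\sum_{k=1}^\infty\frac{a_0}{q^k}\mu_{k,0}+\sum_{r=0}^\infty(a_0+\dots+a_r)\mu_{0,r},$$ and for each $j\ge1$, $$a_j=\sum_{k=0}^{j-1}\sum_{r=0}^\infty a_{j+r-k}\mu_{k,r}+\sum_{k=j+1}^\infty\sum_{r=1}^\infty\frac{a_r}{q^{k-j}}\mu_{k,r}+\frac{q-1}{q}\sum_{k=j}^\infty\frac{a_0}{q^{k-j}}\mu_{k,0}+\sum_{r=1}^\infty\Big(a_0+\dots+a_{r-1}+\frac{q-2}{q-1}a_r\Big)\mu_{j,r}.$$ In particular, if $p(x,y)=0$ whenever $d(x,y)>N$, then $a_j=\sum_{n=-N}^N a_{j+n}\tilde\mu(n)$ for all $j>N$, where $\tilde\mu(n)=\sum_{r-k=n}\mu_{k,r}$.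
   Context: Tree notation: $\mathbb T=\mathbb T_q$ ($q\ge2$) is the homogeneous tree of degree $q+1$ with graph metric $d$, a fixed end $\omega$ and a root $o$. Each vertex $x$ has a unique neighbour $x^-$ (its predecessor) on the geodesic ray from $x$ to $\omega$. $\mathrm{hor}(o)=0$, $\mathrm{hor}(x)=\mathrm{hor}(x^-)+1$. Ancestors of $x$: $x,x^-,(x^-)^-,\dots$; $x\curlywedge y$ is the common ancestor of $x,y$ with maximal $\mathrm{hor}$; $\mathrm{up}(x,y)=\mathrm{hor}(x)-\mathrm{hor}(x\curlywedge y)$. $\partial\mathbb T$ is the space of ends, $\partial^*\mathbb T=\partial\mathbb T\setminus\{\omega\}$. For $\xi\in\partial^*\mathbb T$, $x\curlywedge\xi$ is the vertex of the bi-infinite geodesic from $\omega$ to $\xi$ which is an ancestor of $x$ and has maximal $\mathrm{hor}$, and $\mathrm{up}(x,\xi)=\mathrm{hor}(x)-\mathrm{hor}(x\curlywedge\xi)$. A transition matrix $P$ on $\mathbb T$ is semi-isotropic if $p(x,y)$ depends only on $(\mathrm{up}(x,y),\mathrm{up}(y,x))$. Sets: $T_{k,r}(x)=\{y:\mathrm{up}(x,y)=k,\ \mathrm{up}(y,x)=r\}$, $\Omega_k(x)=\{\eta\in\partial^*\mathbb T:\mathrm{up}(x,\eta)=k\}$; $T_{k,r}=T_{k,r}(o)$, $\Omega_k=\Omega_k(o)$. Group: $\Gamma=\mathrm{Aff}(\mathbb T)$ is the group of all automorphisms of $\mathbb T$ fixing $\omega$; $dg$ is left Haar measure normalized so that the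 stabilizer $\Gamma_o$ of $o$ has measure $1$; $\mu(dg)=p(o,go)\,dg$. For a Radon measure $\nu$ on $\partial^*\mathbb T$, $\mu*\nu(E)=\int_\Gamma\nu(g^{-1}E)\,\mu(dg)$; $\nu$ is $\mu$-invariant if $\mu*\nu=\nu$. *)

theory Defs
  imports "HOL-Analysis.Analysis"
begin

text \<open>Concrete model of the homogeneous tree T_q (degree q+1) with a fixed end omega.
A vertex is a pair (h, f): h = hor(x) and f :: int => nat lists the digits
(values < q) of the path from omega; f n = 0 for n >= h and for n very negative.
The predecessor of (h, f) is (h - 1, f(h-1 := 0)); the q successors of (h, f)
are (h + 1, f(h := i)), i < q.  Ends in the boundary minus omega are digit sequences
xi :: int => nat with values < q vanishing for very negative indices.\<close>

type_synonym vtx = "int \<times> (int \<Rightarrow> nat)"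
type_synonym bend = "int \<Rightarrow> nat"

definition verts :: "nat \<Rightarrow> vtx set" where
  "verts q = {(h, f). (\<forall>n. f n < q) \<and> (\<forall>n\<ge>h. f n = 0) \<and> (\<exists>m. \<forall>n<m. f n = 0)}"

definition pred :: "vtx \<Rightarrow> vtx" where
  "pred x = (fst x - 1, (snd x)(fst x - 1 := 0))"

definition hor :: "vtx \<Rightarrow> int" where
  "hor x = fst x"

definition root :: vtx where
  "root = (0, \<lambda>_. 0)"

definition is_anc :: "vtx \<Rightarrow> vtx \<Rightarrow> bool" where
  "is_anc z x \<longleftrightarrow> (\<exists>n. (pred ^^ n) x = z)"

definition meet :: "vtx \<Rightarrow> vtx \<Rightarrow> vtx" where
  "meet x y = (THE z. is_anc z x \<and> is_anc z y \<and>
      (\<forall>w. is_anc w x \<and> is_anc w y \<longrightarrow> hor w \<le> hor z))"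

definition up :: "vtx \<Rightarrow> vtx \<Rightarrow> nat" where
  "up x y = nat (hor x - hor (meet x y))"

definition tdist :: "vtx \<Rightarrow> vtx \<Rightarrow> nat" where
  "tdist x y = up x y + up y x"

definition ends :: "nat \<Rightarrow> bend set" where
  "ends q = {xi. (\<forall>n. xi n < q) \<and> (\<exists>m. \<forall>n<m. xi n = 0)}"

text \<open>The vertex at horocycle level h on the bi-infinite geodesic from omega to xi.\<close>
definition geo :: "bend \<Rightarrow> int \<Rightarrow> vtx" where
  "geo xi h = (h, \<lambda>n. if n < h then xi n else 0)"

definition on_geo :: "vtx \<Rightarrow> bend \<Rightarrow> bool" where
  "on_geo x xi \<longleftrightarrow> (\<exists>h. x = geo xi h)"

definition meet_end :: "vtx \<Rightarrow> bend \<Rightarrow> vtx" where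
  "meet_end x xi = (THE z. on_geo z xi \<and> is_anc z x \<and>
      (\<forall>w. on_geo w xi \<and> is_anc w x \<longrightarrow> hor w \<le> hor z))"

definition up_end :: "vtx \<Rightarrow> bend \<Rightarrow> nat" where
  "up_end x xi = nat (hor x - hor (meet_end x xi))"

definition Tkr :: "nat \<Rightarrow> nat \<Rightarrow> nat \<Rightarrow> vtx \<Rightarrow> vtx set" where
  "Tkr q k r x = {y \<in> verts q. up x y = k \<and> up y x = r}"

definition Omega :: "nat \<Rightarrow> nat \<Rightarrow> vtx \<Rightarrow> bend set" where
  "Omega q k x = {xi \<in> ends q. up_end x xi = k}"

definition end_top :: "nat \<Rightarrow> bend topology" where
  "end_top q = topology_generated_by {{xi \<in> ends q. on_geo x xi} | x. x \<in> verts q}"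

definition borel_sets_of :: "'a topology \<Rightarrow> 'a set set" where
  "borel_sets_of T = sigma_sets (topspace T) {U. openin T U}"

definition radon_on_ends :: "nat \<Rightarrow> bend measure \<Rightarrow> bool" where
  "radon_on_ends q nu \<longleftrightarrow> space nu = ends q \<and> sets nu = borel_sets_of (end_top q) \<and>
     (\<forall>K. compactin (end_top q) K \<longrightarrow> emeasure nu K < \<infinity>)"

text \<open>Aff(T): automorphisms of the tree fixing omega, i.e. bijections of the vertex set
commuting with the predecessor map (extended by the identity off the vertex set).\<close>
definition Aff :: "nat \<Rightarrow> (vtx \<Rightarrow> vtx) set" where
  "Aff q = {g. bij_betw g (verts q) (verts q) \<and> (\<forall>x\<in>verts q. g (pred x) = pred (g x)) \<and>
              (\<forall>x. x \<notin> verts q \<longrightarrow> g x = x)}"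

text \<open>Topology of pointwise convergence on Aff(T) (vertex set discrete).\<close>
definition aff_top :: "nat \<Rightarrow> (vtx \<Rightarrow> vtx) topology" where
  "aff_top q = topology_generated_by {{g \<in> Aff q. g x = y} | x y. x \<in> verts q \<and> y \<in> verts q}"

definition stab_root :: "nat \<Rightarrow> (vtx \<Rightarrow> vtx) set" where
  "stab_root q = {g \<in> Aff q. g root = root}"

definition is_left_haar :: "nat \<Rightarrow> (vtx \<Rightarrow> vtx) measure \<Rightarrow> bool" where
  "is_left_haar q m \<longleftrightarrow> space m = Aff q \<and> sets m = borel_sets_of (aff_top q) \<and>
     (\<forall>g\<in>Aff q. \<forall>A\<in>sets m. emeasure m ((\<lambda>h. g \<circ> h) ` A) = emeasure m A) \<and>
     (\<forall>K. compactin (aff_top q) K \<longrightarrow> emeasure m K < \<infinity>) \<and>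
     emeasure m (stab_root q) = 1"

definition act_end :: "nat \<Rightarrow> (vtx \<Rightarrow> vtx) \<Rightarrow> bend \<Rightarrow> bend" where
  "act_end q g xi = (THE eta. eta \<in> ends q \<and> (\<forall>x\<in>verts q. on_geo x xi \<longrightarrow> on_geo (g x) eta))"

text \<open>mu * nu (E) = integral of nu(g^-1 E) w.r.t. mu(dg) = p(o, g o) dg.\<close>
definition conv :: "nat \<Rightarrow> (vtx \<Rightarrow> vtx) measure \<Rightarrow> (vtx \<Rightarrow> vtx \<Rightarrow> real) \<Rightarrow> bend measure
                    \<Rightarrow> bend set \<Rightarrow> ennreal" where
  "conv q m p nu E = (\<integral>\<^sup>+ g. emeasure nu {xi \<in> ends q. act_end q g xi \<in> E} *
                              ennreal (p root (g root)) \<partial>m)"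

definition mu_invariant :: "nat \<Rightarrow> (vtx \<Rightarrow> vtx) measure \<Rightarrow> (vtx \<Rightarrow> vtx \<Rightarrow> real) \<Rightarrow> bend measure \<Rightarrow> bool" where
  "mu_invariant q m p nu \<longleftrightarrow> (\<forall>E\<in>sets nu. conv q m p nu E = emeasure nu E)"

definition transition_matrix :: "nat \<Rightarrow> (vtx \<Rightarrow> vtx \<Rightarrow> real) \<Rightarrow> bool" where
  "transition_matrix q p \<longleftrightarrow> (\<forall>x\<in>verts q. \<forall>y\<in>verts q. p x y \<ge> 0) \<and>
     (\<forall>x\<in>verts q. ((\<lambda>y. p x y) has_sum 1) (verts q))"

definition irreducible_tm :: "nat \<Rightarrow> (vtx \<Rightarrow> vtx \<Rightarrow> real) \<Rightarrow> bool" where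
  "irreducible_tm q p \<longleftrightarrow> (\<forall>x\<in>verts q. \<forall>y\<in>verts q.
      (x, y) \<in> {(u, v). u \<in> verts q \<and> v \<in> verts q \<and> p u v > 0}\<^sup>*)"

definition semi_isotropic :: "nat \<Rightarrow> (vtx \<Rightarrow> vtx \<Rightarrow> real) \<Rightarrow> bool" where
  "semi_isotropic q p \<longleftrightarrow> (\<forall>x\<in>verts q. \<forall>y\<in>verts q. \<forall>x'\<in>verts q. \<forall>y'\<in>verts q.
      up x y = up x' y' \<and> up y x = up y' x' \<longrightarrow> p x y = p x' y')"

definition mukr :: "nat \<Rightarrow> (vtx \<Rightarrow> vtx \<Rightarrow> real) \<Rightarrow> nat \<Rightarrow> nat \<Rightarrow> ennreal" where
  "mukr q p k r = ennreal (\<Sum>x\<in>Tkr q k r root. p root x)"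

definition mu_tilde :: "nat \<Rightarrow> (vtx \<Rightarrow> vtx \<Rightarrow> real) \<Rightarrow> int \<Rightarrow> ennreal" where
  "mu_tilde q p n = (\<Sum>k. if int k + n \<ge> 0 then mukr q p k (nat (int k + n)) else 0)"

end

theory Submission
  imports Defs
begin

text \<open>Invariance of \<open>\<nu>\<close> is tested against automorphisms \<open>t\<close> fixing \<open>o\<close> that swap two subtrees
hanging below a common vertex: semi-isotropy gives \<open>p(o, t g o) = p(o, g o)\<close>, and left invariance of
the Haar measure turns \<open>\<mu> * \<nu>\<close> of one subtree into \<open>\<mu> * \<nu>\<close> of the other.  Hence \<open>\<nu>\<close> gives equal mass
to the \<open>q\<close> children of a vertex off the ray from \<open>o\<close> to \<open>\<omega>\<close>, and to the \<open>q - 1\<close> children of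
\<open>o\<^sub>r = (o\<^sup>-)\<^sup>r\<close> other than \<open>o\<^sub>r\<^sub>-\<^sub>1\<close>.  Starting from \<open>\<nu>(cyl o\<^sub>r) = a\<^sub>0 + \<dots> + a\<^sub>r\<close>, this determines
\<open>\<nu>\<close> on every cylinder as an explicit function of \<open>up(o, z)\<close>, \<open>up(z, o)\<close> and the \<open>a\<^sub>j\<close>, so the \<open>a\<^sub>j\<close>
determine \<open>\<nu>\<close>.  The equations come from evaluating \<open>\<mu> * \<nu>(\<Omega>\<^sub>j) = \<nu>(\<Omega>\<^sub>j)\<close>: \<open>\<Gamma>\<close> is the disjoint union
of the cosets \<open>{g. g o = x}\<close>, each of Haar measure 1, and \<open>\<nu>(g\<^sup>-\<^sup>1 \<Omega>\<^sub>j)\<close> depends only on the class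
\<open>T\<^sub>k\<^sub>,\<^sub>r\<close> containing \<open>g o\<close>.\<close>

section \<open>Digit coordinates, meets and the up function\<close>

definition trunc_digits :: "(int \<Rightarrow> nat) \<Rightarrow> int \<Rightarrow> int \<Rightarrow> nat" where
  "trunc_digits f L = (\<lambda>n. if n < L then f n else 0)"

lemma trunc_digits_self: "(h, f) \<in> verts q \<Longrightarrow> trunc_digits f h = f"
  by (auto simp: trunc_digits_def verts_def fun_eq_iff)

lemma trunc_digits_trunc_digits: "L \<le> L' \<Longrightarrow> trunc_digits (trunc_digits f L') L = trunc_digits f L"
  by (auto simp: trunc_digits_def fun_eq_iff)

lemma trunc_digits_eq_iff: "trunc_digits f L = trunc_digits g L \<longleftrightarrow> (\<forall>n<L. f n = g n)"
  by (auto simp: trunc_digits_def fun_eq_iff)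

lemma trunc_digits_in_verts: "(h, f) \<in> verts q \<Longrightarrow> L \<le> h \<Longrightarrow> (L, trunc_digits f L) \<in> verts q"
  unfolding verts_def trunc_digits_def by auto

lemma verts_eventually_zero: "(h, f) \<in> verts q \<Longrightarrow> \<exists>m. \<forall>n<m. f n = 0"
  by (auto simp: verts_def)

lemma ends_eventually_zero: "xi \<in> ends q \<Longrightarrow> \<exists>m. \<forall>n<m. xi n = 0"
  by (auto simp: ends_def)

lemma q_pos_of_verts: "x \<in> verts q \<Longrightarrow> 0 < q"
  by (cases x) (auto simp: verts_def intro: gr0I)

lemma root_in_verts: "0 < q \<Longrightarrow> root \<in> verts q"
  by (auto simp: root_def verts_def)

lemma pred_in_verts: "x \<in> verts q \<Longrightarrow> pred x \<in> verts q"
  by (cases x) (auto simp: verts_def pred_def)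

lemma funpow_pred_eq: "(h, f) \<in> verts q \<Longrightarrow> (pred ^^ n) (h, f) = (h - int n, trunc_digits f (h - int n))"
proof (induction n)
  case 0 then show ?case by (simp add: trunc_digits_self)
next
  case (Suc n)
  then show ?case by (auto simp: pred_def trunc_digits_def fun_eq_iff)
qed

lemma funpow_pred_in_verts: "x \<in> verts q \<Longrightarrow> (pred ^^ n) x \<in> verts q"
  by (induction n) (auto simp: pred_in_verts)

lemma fst_funpow_pred: "fst ((pred ^^ n) x) = fst x - int n"
  by (induction n) (auto simp: pred_def)

lemma is_anc_iff:
  assumes "(h, f) \<in> verts q"
  shows "is_anc z (h, f) \<longleftrightarrow> fst z \<le> h \<and> snd z = trunc_digits f (fst z)"
proof
  assume "is_anc z (h, f)"
  then obtain n where "(pred ^^ n) (h, f) = z" by (auto simp: is_anc_def)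
  then show "fst z \<le> h \<and> snd z = trunc_digits f (fst z)" using funpow_pred_eq[OF assms, of n] by auto
next
  assume a: "fst z \<le> h \<and> snd z = trunc_digits f (fst z)"
  have "(pred ^^ nat (h - fst z)) (h, f) = z"
    using funpow_pred_eq[OF assms, of "nat (h - fst z)"] a by (cases z) auto
  then show "is_anc z (h, f)" by (auto simp: is_anc_def)
qed

lemma is_anc_in_verts: "is_anc z x \<Longrightarrow> x \<in> verts q \<Longrightarrow> z \<in> verts q"
  by (auto simp: is_anc_def funpow_pred_in_verts)

lemma is_anc_hor_le: "is_anc z x \<Longrightarrow> hor z \<le> hor x"
  by (auto simp: is_anc_def hor_def fst_funpow_pred)

lemma anc_unique: "is_anc z x \<Longrightarrow> is_anc z' x \<Longrightarrow> x \<in> verts q \<Longrightarrow> hor z = hor z' \<Longrightarrow> z = z'"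
  by (cases x) (auto simp: is_anc_iff hor_def prod_eq_iff)

text \<open>For two vertices \<open>(h\<^sub>1, f\<^sub>1)\<close>, \<open>(h\<^sub>2, f\<^sub>2)\<close>, \<open>agree_level (min h\<^sub>1 h\<^sub>2) f\<^sub>1 f\<^sub>2\<close> is the
horocycle index of their meet.\<close>

definition agree_level :: "int \<Rightarrow> (int \<Rightarrow> nat) \<Rightarrow> (int \<Rightarrow> nat) \<Rightarrow> int" where
  "agree_level H f g = (GREATEST L. L \<le> H \<and> (\<forall>n<L. f n = g n))"

lemma agree_level_spec:
  assumes "\<forall>n<m1. (f1::int\<Rightarrow>nat) n = 0" "\<forall>n<m2. f2 n = 0"
  shows "agree_level H f1 f2 \<le> H" "\<forall>n<agree_level H f1 f2. f1 n = f2 n"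
    "\<And>L. L \<le> H \<Longrightarrow> (\<forall>n<L. f1 n = f2 n) \<Longrightarrow> L \<le> agree_level H f1 f2"
proof -
  define L0 where "L0 = min (min m1 m2) H"
  define S where "S = {L \<in> {L0..H}. \<forall>n<L. f1 n = f2 n}"
  have L0: "L0 \<in> S" using assms by (auto simp: L0_def S_def)
  have fin: "finite S" by (rule finite_subset[of _ "{L0..H}"]) (auto simp: S_def)
  have LS: "Max S \<in> S" using fin L0 by (intro Max_in) auto
  have greatest: "L \<le> Max S" if "L \<le> H" "\<forall>n<L. f1 n = f2 n" for L
  proof (cases "L < L0")
    case True then show ?thesis using L0 fin by (meson Max_ge less_le_trans order.strict_implies_order)
  next
    case False then show ?thesis using that fin by (simp add: S_def)
  qed
  have "agree_level H f1 f2 = Max S" unfolding agree_level_def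
    by (rule Greatest_equality) (use LS greatest in \<open>auto simp: S_def\<close>)
  then show "agree_level H f1 f2 \<le> H" "\<forall>n<agree_level H f1 f2. f1 n = f2 n"
    "\<And>L. L \<le> H \<Longrightarrow> (\<forall>n<L. f1 n = f2 n) \<Longrightarrow> L \<le> agree_level H f1 f2"
    using LS greatest by (auto simp: S_def)
qed

lemma agree_level_unique:
  assumes "L \<le> H" "\<forall>n<L. f n = g n" "\<forall>L'. L' \<le> H \<and> (\<forall>n<L'. f n = g n) \<longrightarrow> L' \<le> L"
  shows "agree_level H f g = L"
  unfolding agree_level_def by (rule Greatest_equality) (use assms in auto)

lemma agree_level_ge_iff:
  assumes "\<forall>n<m1. (f1::int\<Rightarrow>nat) n = 0" "\<forall>n<m2. f2 n = 0" "L \<le> H"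
  shows "L \<le> agree_level H f1 f2 \<longleftrightarrow> (\<forall>n<L. f1 n = f2 n)"
proof
  assume "L \<le> agree_level H f1 f2"
  then show "\<forall>n<L. f1 n = f2 n" using agree_level_spec(2)[OF assms(1,2), of H] by auto
qed (use agree_level_spec(3)[OF assms(1,2)] assms(3) in blast)

lemma agree_level_commute: "agree_level H f g = agree_level H g f"
  unfolding agree_level_def by metis

lemma common_anc_iff:
  assumes x: "(h1, f1) \<in> verts q" and y: "(h2, f2) \<in> verts q"
  shows "is_anc w (h1, f1) \<and> is_anc w (h2, f2) \<longleftrightarrow>
    fst w \<le> min h1 h2 \<and> (\<forall>n<fst w. f1 n = f2 n) \<and> snd w = trunc_digits f1 (fst w)"
  unfolding is_anc_iff[OF x] is_anc_iff[OF y] by (auto simp: trunc_digits_eq_iff)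

lemma meet_eq:
  assumes x: "(h1, f1) \<in> verts q" and y: "(h2, f2) \<in> verts q"
  shows "meet (h1, f1) (h2, f2) =
    (agree_level (min h1 h2) f1 f2, trunc_digits f1 (agree_level (min h1 h2) f1 f2))"
proof -
  obtain m1 m2 where m: "\<forall>n<m1. f1 n = 0" "\<forall>n<m2. f2 n = 0"
    using verts_eventually_zero[OF x] verts_eventually_zero[OF y] by blast
  note P = agree_level_spec[OF m, where H="min h1 h2"]
  define L where "L = agree_level (min h1 h2) f1 f2"
  note C = common_anc_iff[OF x y]
  have L: "is_anc (L, trunc_digits f1 L) (h1, f1) \<and> is_anc (L, trunc_digits f1 L) (h2, f2)"
    using P(1,2) by (simp add: C L_def)
  show ?thesis unfolding meet_def L_def[symmetric]
  proof (rule the_equality)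
    show "is_anc (L, trunc_digits f1 L) (h1, f1) \<and> is_anc (L, trunc_digits f1 L) (h2, f2) \<and>
      (\<forall>w. is_anc w (h1, f1) \<and> is_anc w (h2, f2) \<longrightarrow> hor w \<le> hor (L, trunc_digits f1 L))"
      using L P(3) by (auto simp: C hor_def L_def)
    fix z assume z: "is_anc z (h1, f1) \<and> is_anc z (h2, f2) \<and>
      (\<forall>w. is_anc w (h1, f1) \<and> is_anc w (h2, f2) \<longrightarrow> hor w \<le> hor z)"
    then have "fst z \<le> min h1 h2 \<and> (\<forall>n<fst z. f1 n = f2 n) \<and> snd z = trunc_digits f1 (fst z)"
      using C by blast
    then have "fst z \<le> L" "snd z = trunc_digits f1 (fst z)" using P(3) by (auto simp: L_def)
    moreover have "L \<le> fst z" using z L by (auto simp: hor_def)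
    ultimately show "z = (L, trunc_digits f1 L)" by (cases z) auto
  qed
qed

lemma meet_spec:
  assumes x: "x \<in> verts q" and y: "y \<in> verts q"
  shows "is_anc (meet x y) x" "is_anc (meet x y) y"
    "\<forall>w. is_anc w x \<and> is_anc w y \<longrightarrow> hor w \<le> hor (meet x y)"
proof -
  obtain h1 f1 h2 f2 where e: "x = (h1, f1)" "y = (h2, f2)" by (cases x, cases y)
  have xv: "(h1, f1) \<in> verts q" and yv: "(h2, f2) \<in> verts q" using x y e by auto
  obtain m1 m2 where m: "\<forall>n<m1. f1 n = 0" "\<forall>n<m2. f2 n = 0"
    using verts_eventually_zero[OF xv] verts_eventually_zero[OF yv] by blast
  note P = agree_level_spec[OF m, where H="min h1 h2"]
  have "is_anc (meet x y) x \<and> is_anc (meet x y) y"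
    unfolding e meet_eq[OF xv yv] common_anc_iff[OF xv yv] using P(1,2) by simp
  then show "is_anc (meet x y) x" "is_anc (meet x y) y" by blast+
  show "\<forall>w. is_anc w x \<and> is_anc w y \<longrightarrow> hor w \<le> hor (meet x y)"
    using P(3) common_anc_iff[OF xv yv] by (auto simp: e meet_eq[OF xv yv] hor_def)
qed

lemma meet_unique:
  assumes x: "x \<in> verts q" and y: "y \<in> verts q"
    and z: "is_anc z x" "is_anc z y" "\<forall>w. is_anc w x \<and> is_anc w y \<longrightarrow> hor w \<le> hor z"
  shows "meet x y = z"
  using meet_spec[OF x y] z anc_unique[OF _ _ x] by (meson order.antisym)

lemma up_eq:
  assumes "(h1, f1) \<in> verts q" "(h2, f2) \<in> verts q"
  shows "up (h1, f1) (h2, f2) = nat (h1 - agree_level (min h1 h2) f1 f2)"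
  by (simp add: up_def meet_eq[OF assms] hor_def)

lemma up_eq_0_iff_is_anc:
  assumes x: "x \<in> verts q" and y: "y \<in> verts q"
  shows "up x y = 0 \<longleftrightarrow> is_anc x y"
proof
  have xx: "is_anc x x" by (auto simp: is_anc_def intro: exI[of _ 0])
  {
    assume "up x y = 0"
    then have "hor (meet x y) = hor x"
      using is_anc_hor_le[OF meet_spec(1)[OF x y]] by (simp add: up_def)
    then have "meet x y = x" using anc_unique[OF meet_spec(1)[OF x y] xx x] by simp
    then show "is_anc x y" using meet_spec(2)[OF x y] by simp
  }
  assume "is_anc x y"
  then have "hor x \<le> hor (meet x y)" using meet_spec(3)[OF x y] xx by blast
  then show "up x y = 0" by (simp add: up_def)
qed

lemma geo_eq: "geo xi h = (h, trunc_digits xi h)"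
  by (simp add: geo_def trunc_digits_def)

lemma geo_in_verts: "xi \<in> ends q \<Longrightarrow> geo xi h \<in> verts q"
  by (auto simp: geo_def verts_def ends_def)

lemma on_geo_iff:
  assumes "(h, f) \<in> verts q"
  shows "on_geo (h, f) xi \<longleftrightarrow> (\<forall>n<h. xi n = f n)"
  using assms by (auto simp: on_geo_def geo_def verts_def fun_eq_iff)

lemma on_geo_iff_trunc_digits: "on_geo w xi \<longleftrightarrow> snd w = trunc_digits xi (fst w)"
  by (cases w) (auto simp: on_geo_def geo_eq)

lemma geo_unique: "on_geo z xi \<Longrightarrow> on_geo z' xi \<Longrightarrow> hor z = hor z' \<Longrightarrow> z = z'"
  by (auto simp: on_geo_def geo_def hor_def)

lemma geo_anc_iff:
  assumes x: "(h, f) \<in> verts q"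
  shows "on_geo w xi \<and> is_anc w (h, f) \<longleftrightarrow>
    fst w \<le> h \<and> (\<forall>n<fst w. f n = xi n) \<and> snd w = trunc_digits f (fst w)"
  unfolding is_anc_iff[OF x] on_geo_iff_trunc_digits by (auto simp: trunc_digits_eq_iff)

lemma meet_end_eq:
  assumes x: "(h, f) \<in> verts q" and xi: "xi \<in> ends q"
  shows "meet_end (h, f) xi = (agree_level h f xi, trunc_digits f (agree_level h f xi))"
proof -
  obtain m1 m2 where m: "\<forall>n<m1. f n = 0" "\<forall>n<m2. xi n = 0"
    using verts_eventually_zero[OF x] ends_eventually_zero[OF xi] by blast
  note P = agree_level_spec[OF m, where H=h]
  define L where "L = agree_level h f xi"
  note G = geo_anc_iff[OF x]
  have L: "on_geo (L, trunc_digits f L) xi \<and> is_anc (L, trunc_digits f L) (h, f)"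
    using P(1,2) by (simp add: G L_def)
  show ?thesis unfolding meet_end_def L_def[symmetric]
  proof (rule the_equality)
    show "on_geo (L, trunc_digits f L) xi \<and> is_anc (L, trunc_digits f L) (h, f) \<and>
      (\<forall>w. on_geo w xi \<and> is_anc w (h, f) \<longrightarrow> hor w \<le> hor (L, trunc_digits f L))"
      using L P(3) by (auto simp: G hor_def L_def)
    fix z assume z: "on_geo z xi \<and> is_anc z (h, f) \<and>
      (\<forall>w. on_geo w xi \<and> is_anc w (h, f) \<longrightarrow> hor w \<le> hor z)"
    then have "fst z \<le> h \<and> (\<forall>n<fst z. f n = xi n) \<and> snd z = trunc_digits f (fst z)"
      using G by blast
    then have "fst z \<le> L" "snd z = trunc_digits f (fst z)" using P(3) by (auto simp: L_def)
    moreover have "L \<le> fst z" using z L by (auto simp: hor_def)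
    ultimately show "z = (L, trunc_digits f L)" by (cases z) auto
  qed
qed

lemma meet_end_spec:
  assumes x: "x \<in> verts q" and xi: "xi \<in> ends q"
  shows "on_geo (meet_end x xi) xi" "is_anc (meet_end x xi) x"
    "\<forall>w. on_geo w xi \<and> is_anc w x \<longrightarrow> hor w \<le> hor (meet_end x xi)"
proof -
  obtain h f where e: "x = (h, f)" by (cases x)
  have xv: "(h, f) \<in> verts q" using x e by auto
  obtain m1 m2 where m: "\<forall>n<m1. f n = 0" "\<forall>n<m2. xi n = 0"
    using verts_eventually_zero[OF xv] ends_eventually_zero[OF xi] by blast
  note P = agree_level_spec[OF m, where H=h]
  have "on_geo (meet_end x xi) xi \<and> is_anc (meet_end x xi) x"
    unfolding e meet_end_eq[OF xv xi] geo_anc_iff[OF xv] using P(1,2) by simp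
  then show "on_geo (meet_end x xi) xi" "is_anc (meet_end x xi) x" by blast+
  show "\<forall>w. on_geo w xi \<and> is_anc w x \<longrightarrow> hor w \<le> hor (meet_end x xi)"
    using P(3) geo_anc_iff[OF xv] by (auto simp: e meet_end_eq[OF xv xi] hor_def)
qed

lemma meet_end_unique:
  assumes x: "x \<in> verts q"
    and z: "on_geo z xi" "is_anc z x" "\<forall>w. on_geo w xi \<and> is_anc w x \<longrightarrow> hor w \<le> hor z"
  shows "meet_end x xi = z"
  unfolding meet_end_def
proof (rule the_equality)
  show "on_geo z xi \<and> is_anc z x \<and> (\<forall>w. on_geo w xi \<and> is_anc w x \<longrightarrow> hor w \<le> hor z)" using z by blast
  fix z' assume z': "on_geo z' xi \<and> is_anc z' x \<and> (\<forall>w. on_geo w xi \<and> is_anc w x \<longrightarrow> hor w \<le> hor z')"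
  then have "hor z' = hor z" using z by (meson order.antisym)
  then show "z' = z" using anc_unique[OF _ _ x] z z' by blast
qed

lemma up_end_eq:
  assumes "(h, f) \<in> verts q" "xi \<in> ends q"
  shows "up_end (h, f) xi = nat (h - agree_level h f xi)"
  by (simp add: up_end_def meet_end_eq[OF assms] hor_def)

section \<open>Position relative to the root\<close>

definition root_anc :: "nat \<Rightarrow> vtx" where
  "root_anc j = (- int j, \<lambda>_. 0)"

lemma root_anc_in_verts: "0 < q \<Longrightarrow> root_anc j \<in> verts q"
  by (auto simp: root_anc_def verts_def)

lemma funpow_pred_root: "(pred ^^ j) root = root_anc j"
  using funpow_pred_eq[of 0 "\<lambda>_. 0" 2 j]
  by (simp add: root_def root_anc_def trunc_digits_def verts_def fun_eq_iff)

lemma up_root_eqs: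
  assumes z: "(h, f) \<in> verts q"
  shows "up root (h, f) = nat (- agree_level (min 0 h) (\<lambda>_. 0) f)"
    "up (h, f) root = nat (h - agree_level (min 0 h) (\<lambda>_. 0) f)"
proof -
  have r: "(0, \<lambda>_. 0::nat) \<in> verts q" using root_in_verts[OF q_pos_of_verts[OF z]] by (simp add: root_def)
  show "up root (h, f) = nat (- agree_level (min 0 h) (\<lambda>_. 0) f)"
    "up (h, f) root = nat (h - agree_level (min 0 h) (\<lambda>_. 0) f)"
    using up_eq[OF r z] up_eq[OF z r] by (simp_all add: root_def agree_level_commute min.commute)
qed

lemma up_funpow_pred_root:
  assumes y: "y \<in> verts q"
  shows "up root ((pred ^^ i) y) = (if i \<le> up y root then up root y else up root y + i - up y root)"
    "up ((pred ^^ i) y) root = up y root - i"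
proof -
  obtain h f where e: "y = (h, f)" by (cases y)
  have yv: "(h, f) \<in> verts q" using y e by simp
  obtain m where m: "\<forall>n<m. f n = 0" using verts_eventually_zero[OF yv] by blast
  have z0: "\<forall>n<(0::int). (\<lambda>_. 0::nat) n = 0" by simp
  note P = agree_level_spec[OF z0 m]
  define L where "L = agree_level (min 0 h) (\<lambda>_. 0) f"
  have L0: "L \<le> 0" "L \<le> h" "\<forall>n<L. f n = 0" using P(1,2)[of "min 0 h"] by (auto simp: L_def)
  have Lmax: "L' \<le> L" if "L' \<le> 0" "L' \<le> h" "\<forall>n<L'. f n = 0" for L'
    using P(3)[of L' "min 0 h"] that by (auto simp: L_def)
  have pe: "(pred ^^ i) y = (h - int i, trunc_digits f (h - int i))"
    using funpow_pred_eq[OF yv] e by simp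
  have pv: "(h - int i, trunc_digits f (h - int i)) \<in> verts q"
    using funpow_pred_in_verts[OF y, of i] pe by simp
  have L': "agree_level (min 0 (h - int i)) (\<lambda>_. 0) (trunc_digits f (h - int i)) = min L (h - int i)"
  proof (rule agree_level_unique)
    show "\<forall>L'. L' \<le> min 0 (h - int i) \<and> (\<forall>n<L'. 0 = trunc_digits f (h - int i) n) \<longrightarrow>
        L' \<le> min L (h - int i)"
      using Lmax by (auto simp: trunc_digits_def)
  qed (use L0 in \<open>auto simp: trunc_digits_def\<close>)
  have A: "up root ((pred ^^ i) y) = nat (- min L (h - int i))"
    "up ((pred ^^ i) y) root = nat (h - int i - min L (h - int i))"
    using up_root_eqs[OF pv] L' pe by simp_all
  have B: "up root y = nat (- L)" "up y root = nat (h - L)"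
    using up_root_eqs[OF yv] e by (simp_all add: L_def)
  show "up root ((pred ^^ i) y) = (if i \<le> up y root then up root y else up root y + i - up y root)"
    "up ((pred ^^ i) y) root = up y root - i"
    using A B L0 by (auto simp: min_def)
qed

lemma up_root_root:
  assumes "0 < (q::nat)" shows "up root root = 0"
proof -
  have "is_anc root root" by (metis is_anc_def funpow_0)
  then show ?thesis using up_eq_0_iff_is_anc[OF root_in_verts[OF assms] root_in_verts[OF assms]] by simp
qed

lemma up_root_anc:
  assumes "0 < (q::nat)"
  shows "up root (root_anc j) = j" "up (root_anc j) root = 0"
  using up_funpow_pred_root[OF root_in_verts[OF assms], of j] up_root_root[OF assms]
  by (simp_all add: funpow_pred_root)

lemma up_root_eq_0_iff:
  assumes z: "z \<in> verts q"
  shows "up z root = 0 \<longleftrightarrow> z = root_anc (up root z)"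
proof
  have q: "0 < q" using q_pos_of_verts[OF z] .
  assume "up z root = 0"
  then obtain n where "z = root_anc n"
    using up_eq_0_iff_is_anc[OF z root_in_verts[OF q]] by (auto simp: is_anc_def funpow_pred_root)
  then show "z = root_anc (up root z)" using up_root_anc[OF q] by simp
qed (use up_root_anc q_pos_of_verts[OF z] in metis)

section \<open>Automorphisms fixing \<open>\<omega>\<close> and their action on ends\<close>

lemma Aff_verts: "g \<in> Aff q \<Longrightarrow> x \<in> verts q \<Longrightarrow> g x \<in> verts q"
  by (auto simp: Aff_def bij_betw_def)

lemma Aff_inj: "g \<in> Aff q \<Longrightarrow> x \<in> verts q \<Longrightarrow> y \<in> verts q \<Longrightarrow> g x = g y \<Longrightarrow> x = y"
  by (auto simp: Aff_def bij_betw_def inj_on_def)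

lemma Aff_surj: "g \<in> Aff q \<Longrightarrow> y \<in> verts q \<Longrightarrow> \<exists>x\<in>verts q. g x = y"
  unfolding Aff_def bij_betw_def by (metis (mono_tags, lifting) imageE mem_Collect_eq)

lemma Aff_pred: "g \<in> Aff q \<Longrightarrow> x \<in> verts q \<Longrightarrow> g (pred x) = pred (g x)"
  by (auto simp: Aff_def)

lemma Aff_funpow_pred: "g \<in> Aff q \<Longrightarrow> x \<in> verts q \<Longrightarrow> g ((pred ^^ n) x) = (pred ^^ n) (g x)"
  by (induction n) (auto simp: Aff_pred funpow_pred_in_verts)

lemma Aff_comp:
  assumes g1: "g1 \<in> Aff q" and g2: "g2 \<in> Aff q"
  shows "g1 \<circ> g2 \<in> Aff q"
  using assms unfolding Aff_def by (auto intro: bij_betw_trans simp: Aff_pred[OF g1] Aff_verts[OF g2])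

lemma Aff_hor:
  assumes g: "g \<in> Aff q" and x: "x \<in> verts q"
  shows "hor (g x) = hor x + fst (g root)"
proof -
  have r: "root \<in> verts q" using root_in_verts[OF q_pos_of_verts[OF x]] .
  obtain n n' where n: "(pred ^^ n) x = meet x root" "(pred ^^ n') root = meet x root"
    using meet_spec(1,2)[OF x r] by (auto simp: is_anc_def)
  then have e: "(pred ^^ n) x = (pred ^^ n') root" by simp
  then have "(pred ^^ n) (g x) = (pred ^^ n') (g root)"
    using Aff_funpow_pred[OF g x, of n] Aff_funpow_pred[OF g r, of n'] by simp
  from arg_cong[OF this, of fst] arg_cong[OF e, of fst] show ?thesis
    by (simp add: fst_funpow_pred hor_def root_def)
qed

lemma is_anc_Aff:
  assumes g: "g \<in> Aff q" and x: "x \<in> verts q" and z: "z \<in> verts q"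
  shows "is_anc (g z) (g x) \<longleftrightarrow> is_anc z x"
proof
  assume "is_anc (g z) (g x)"
  then obtain n where "(pred ^^ n) (g x) = g z" by (auto simp: is_anc_def)
  then have "(pred ^^ n) x = z"
    using Aff_funpow_pred[OF g x] Aff_inj[OF g funpow_pred_in_verts[OF x] z] by simp
  then show "is_anc z x" by (auto simp: is_anc_def)
qed (auto simp: is_anc_def Aff_funpow_pred[OF g x, symmetric])

lemma meet_Aff:
  assumes g: "g \<in> Aff q" and x: "x \<in> verts q" and y: "y \<in> verts q"
  shows "meet (g x) (g y) = g (meet x y)"
proof (rule meet_unique[OF Aff_verts[OF g x] Aff_verts[OF g y]])
  note M = meet_spec[OF x y]
  have mv: "meet x y \<in> verts q" using is_anc_in_verts[OF M(1) x] .
  show "is_anc (g (meet x y)) (g x)" "is_anc (g (meet x y)) (g y)"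
    using M is_anc_Aff[OF g x mv] is_anc_Aff[OF g y mv] by auto
  show "\<forall>w. is_anc w (g x) \<and> is_anc w (g y) \<longrightarrow> hor w \<le> hor (g (meet x y))"
  proof (intro allI impI)
    fix w assume w: "is_anc w (g x) \<and> is_anc w (g y)"
    then have wv: "w \<in> verts q" using is_anc_in_verts Aff_verts[OF g x] by blast
    obtain w' where w': "w' \<in> verts q" "g w' = w" using Aff_surj[OF g wv] by blast
    have "is_anc w' x" "is_anc w' y" using w w' is_anc_Aff[OF g x w'(1)] is_anc_Aff[OF g y w'(1)] by auto
    then have "hor w' \<le> hor (meet x y)" using M(3) by blast
    then show "hor w \<le> hor (g (meet x y))" using Aff_hor[OF g w'(1)] Aff_hor[OF g mv] w' by simp
  qed
qed

lemma up_Aff: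
  assumes g: "g \<in> Aff q" and x: "x \<in> verts q" and y: "y \<in> verts q"
  shows "up (g x) (g y) = up x y"
proof -
  have mv: "meet x y \<in> verts q" using is_anc_in_verts[OF meet_spec(1)[OF x y] x] .
  show ?thesis unfolding up_def meet_Aff[OF assms] using Aff_hor[OF g x] Aff_hor[OF g mv] by simp
qed

lemma end_image_exists:
  assumes g: "g \<in> Aff q" and xi: "xi \<in> ends q"
  shows "\<exists>eta\<in>ends q. \<forall>x\<in>verts q. on_geo x xi \<longrightarrow> on_geo (g x) eta"
proof -
  define c where "c = fst (g root)"
  define G where "G h = snd (g (geo xi h))" for h
  define eta where "eta k = G (k + 1 - c) k" for k
  have gv: "g (geo xi h) \<in> verts q" for h using Aff_verts[OF g geo_in_verts[OF xi]] .
  have gG: "g (geo xi h) = (h + c, G h)" for h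
    using Aff_hor[OF g geo_in_verts[OF xi]] by (simp add: hor_def geo_def c_def G_def prod_eq_iff)
  have Gv: "(h + c, G h) \<in> verts q" for h using gv gG by metis
  have chain: "G h = trunc_digits (G (h + int n)) (h + c)" for h n
  proof -
    have "(pred ^^ n) (geo xi (h + int n)) = geo xi h"
      using funpow_pred_eq[of "h + int n" "trunc_digits xi (h + int n)" q] geo_in_verts[OF xi, of "h + int n"]
      by (simp add: geo_eq trunc_digits_trunc_digits)
    then have "g (geo xi h) = (pred ^^ n) (g (geo xi (h + int n)))"
      using Aff_funpow_pred[OF g geo_in_verts[OF xi]] by metis
    also have "\<dots> = (h + c, trunc_digits (G (h + int n)) (h + c))"
      using funpow_pred_eq[OF Gv[of "h + int n"], of n] gG[of "h + int n"] by simp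
    finally show ?thesis using gG by simp
  qed
  have key: "G h k = eta k" if "k < h + c" for h k
  proof -
    have "G (k + 1 - c) = trunc_digits (G h) (k + 1)" using chain[of "k + 1 - c" "nat (h - (k + 1 - c))"] that by simp
    then show ?thesis by (simp add: eta_def trunc_digits_def)
  qed
  have "eta \<in> ends q"
  proof -
    obtain m where m: "\<forall>n<m. G 0 n = 0" using verts_eventually_zero[OF Gv[of 0]] by blast
    have "\<forall>n<min m c. eta n = 0" using key[of _ 0] m by (metis add_0 min_less_iff_conj)
    moreover have "\<forall>n. eta n < q" using Gv by (auto simp: eta_def verts_def)
    ultimately show ?thesis unfolding ends_def by (auto intro!: exI[of _ "min m c"])
  qed
  moreover have "on_geo (g x) eta" if "on_geo x xi" for x
  proof -
    from that obtain h where "x = geo xi h" unfolding on_geo_def by blast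
    then show ?thesis using key[of _ h] by (simp add: gG on_geo_iff[OF Gv])
  qed
  ultimately show ?thesis by blast
qed

lemma end_image_unique:
  assumes g: "g \<in> Aff q" and xi: "xi \<in> ends q"
    and eta: "\<forall>x\<in>verts q. on_geo x xi \<longrightarrow> on_geo (g x) eta"
    and eta': "\<forall>x\<in>verts q. on_geo x xi \<longrightarrow> on_geo (g x) eta'"
  shows "eta = eta'"
proof
  fix k
  define v where "v = g (geo xi (k + 1 - fst (g root)))"
  have vv: "v \<in> verts q" using Aff_verts[OF g geo_in_verts[OF xi]] by (simp add: v_def)
  have fv: "fst v = k + 1" using Aff_hor[OF g geo_in_verts[OF xi]] by (simp add: v_def hor_def geo_def)
  have "on_geo (geo xi (k + 1 - fst (g root))) xi" by (auto simp: on_geo_def)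
  then have "on_geo v eta" "on_geo v eta'" using eta eta' geo_in_verts[OF xi] by (auto simp: v_def)
  then show "eta k = eta' k" using vv fv by (cases v) (simp add: on_geo_iff)
qed

lemma act_end_spec:
  assumes g: "g \<in> Aff q" and xi: "xi \<in> ends q"
  shows "act_end q g xi \<in> ends q" "\<forall>x\<in>verts q. on_geo x xi \<longrightarrow> on_geo (g x) (act_end q g xi)"
proof -
  have "\<exists>!eta. eta \<in> ends q \<and> (\<forall>x\<in>verts q. on_geo x xi \<longrightarrow> on_geo (g x) eta)"
    using end_image_exists[OF g xi] end_image_unique[OF g xi] by blast
  from theI'[OF this] show "act_end q g xi \<in> ends q"
    "\<forall>x\<in>verts q. on_geo x xi \<longrightarrow> on_geo (g x) (act_end q g xi)"
    unfolding act_end_def by blast+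
qed

lemma act_end_unique:
  assumes g: "g \<in> Aff q" and xi: "xi \<in> ends q"
    and P: "\<forall>x\<in>verts q. on_geo x xi \<longrightarrow> on_geo (g x) eta"
  shows "act_end q g xi = eta"
  using end_image_unique[OF g xi act_end_spec(2)[OF g xi] P] .

lemma act_end_comp:
  assumes g1: "g1 \<in> Aff q" and g2: "g2 \<in> Aff q" and xi: "xi \<in> ends q"
  shows "act_end q (g1 \<circ> g2) xi = act_end q g1 (act_end q g2 xi)"
proof (rule act_end_unique[OF Aff_comp[OF g1 g2] xi])
  have e2: "act_end q g2 xi \<in> ends q" using act_end_spec[OF g2 xi] by blast
  show "\<forall>x\<in>verts q. on_geo x xi \<longrightarrow> on_geo ((g1 \<circ> g2) x) (act_end q g1 (act_end q g2 xi))"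
    using act_end_spec[OF g2 xi] act_end_spec[OF g1 e2] Aff_verts[OF g2] by auto
qed

lemma up_end_Aff:
  assumes g: "g \<in> Aff q" and x: "x \<in> verts q" and xi: "xi \<in> ends q"
  shows "up_end (g x) (act_end q g xi) = up_end x xi"
proof -
  define eta where "eta = act_end q g xi"
  have eta: "\<forall>x\<in>verts q. on_geo x xi \<longrightarrow> on_geo (g x) eta"
    using act_end_spec[OF g xi] by (auto simp: eta_def)
  note M = meet_end_spec[OF x xi]
  have mv: "meet_end x xi \<in> verts q" using is_anc_in_verts[OF M(2) x] .
  have "meet_end (g x) eta = g (meet_end x xi)"
  proof (rule meet_end_unique[OF Aff_verts[OF g x]])
    show "on_geo (g (meet_end x xi)) eta" using eta M mv by blast
    show "is_anc (g (meet_end x xi)) (g x)" using M is_anc_Aff[OF g x mv] by auto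
    show "\<forall>w. on_geo w eta \<and> is_anc w (g x) \<longrightarrow> hor w \<le> hor (g (meet_end x xi))"
    proof (intro allI impI)
      fix w assume w: "on_geo w eta \<and> is_anc w (g x)"
      then have wv: "w \<in> verts q" using is_anc_in_verts Aff_verts[OF g x] by blast
      obtain w' where w': "w' \<in> verts q" "g w' = w" using Aff_surj[OF g wv] by blast
      have aw: "is_anc w' x" using w w' is_anc_Aff[OF g x w'(1)] by auto
      define v where "v = geo xi (hor w')"
      have vv: "v \<in> verts q" using geo_in_verts[OF xi] by (simp add: v_def)
      have "on_geo (g v) eta" using eta vv by (auto simp: v_def on_geo_def)
      moreover have "hor (g v) = hor w" using Aff_hor[OF g vv] Aff_hor[OF g w'(1)] w'
        by (simp add: v_def hor_def geo_def)
      ultimately have "g v = w" using geo_unique w by blast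
      then have "v = w'" using Aff_inj[OF g vv w'(1)] w' by simp
      then have "on_geo w' xi" unfolding v_def on_geo_def by metis
      then have "hor w' \<le> hor (meet_end x xi)" using M(3) aw by blast
      then show "hor w \<le> hor (g (meet_end x xi))" using Aff_hor[OF g w'(1)] Aff_hor[OF g mv] w' by simp
    qed
  qed
  then show ?thesis unfolding up_end_def eta_def[symmetric]
    using Aff_hor[OF g x] Aff_hor[OF g mv] by simp
qed

section \<open>Cylinder sets of ends\<close>

definition cyl :: "nat \<Rightarrow> vtx \<Rightarrow> bend set" where
  "cyl q x = {xi \<in> ends q. on_geo x xi}"

definition child :: "vtx \<Rightarrow> nat \<Rightarrow> vtx" where
  "child v c = (fst v + 1, (snd v)(fst v := c))"

lemma cyl_iff: "(h, f) \<in> verts q \<Longrightarrow> xi \<in> cyl q (h, f) \<longleftrightarrow> xi \<in> ends q \<and> (\<forall>n<h. xi n = f n)"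
  by (simp add: cyl_def on_geo_iff)

lemma cyl_geo: "x \<in> verts q \<Longrightarrow> xi \<in> cyl q x \<Longrightarrow> x = geo xi (fst x)"
  by (auto simp: cyl_def on_geo_def geo_def)

lemma in_cyl_geo: "xi \<in> ends q \<Longrightarrow> xi \<in> cyl q (geo xi h)"
  by (auto simp: cyl_def on_geo_def)

lemma cyl_geo_mono: "xi \<in> ends q \<Longrightarrow> h' \<le> h \<Longrightarrow> cyl q (geo xi h) \<subseteq> cyl q (geo xi h')"
  using geo_in_verts[of xi q] by (auto simp: geo_eq cyl_iff trunc_digits_def)

lemma up_end_le_iff_cyl:
  assumes y: "y \<in> verts q" and xi: "xi \<in> ends q"
  shows "up_end y xi \<le> n \<longleftrightarrow> xi \<in> cyl q ((pred ^^ n) y)"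
proof -
  obtain h f where e: "y = (h, f)" by (cases y)
  have yv: "(h, f) \<in> verts q" using y e by simp
  obtain m1 m2 where m: "\<forall>k<m1. f k = 0" "\<forall>k<m2. xi k = 0"
    using verts_eventually_zero[OF yv] ends_eventually_zero[OF xi] by blast
  have v: "(h - int n, trunc_digits f (h - int n)) \<in> verts q" using trunc_digits_in_verts[OF yv] by simp
  have "up_end y xi \<le> n \<longleftrightarrow> h - int n \<le> agree_level h f xi" using up_end_eq[OF yv xi] e by auto
  also have "\<dots> \<longleftrightarrow> (\<forall>k<h - int n. f k = xi k)" by (rule agree_level_ge_iff[OF m]) simp
  also have "\<dots> \<longleftrightarrow> xi \<in> cyl q ((pred ^^ n) y)"
    unfolding e funpow_pred_eq[OF yv] cyl_iff[OF v] using xi by (auto simp: trunc_digits_def)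
  finally show ?thesis .
qed

lemma child_in_verts:
  assumes w: "w \<in> verts q" and c: "c < q"
  shows "child w c \<in> verts q"
proof -
  obtain m where m: "\<forall>n<m. snd w n = 0" using verts_eventually_zero[of "fst w" "snd w" q] w by auto
  show ?thesis using w c m unfolding child_def verts_def by (auto intro!: exI[of _ "min m (fst w)"])
qed

lemma child_pred:
  assumes "z \<in> verts q"
  shows "z = child (pred z) (snd z (fst z - 1))" "snd z (fst z - 1) < q"
  using assms by (cases z; auto simp: child_def pred_def verts_def)+

lemma cyl_child_iff:
  assumes "w \<in> verts q" "c < q"
  shows "xi \<in> cyl q (child w c) \<longleftrightarrow> xi \<in> ends q \<and> (\<forall>n<fst w. xi n = snd w n) \<and> xi (fst w) = c"
proof -
  have cv: "(fst w + 1, (snd w)(fst w := c)) \<in> verts q" using child_in_verts[OF assms] by (simp add: child_def)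
  show ?thesis unfolding child_def cyl_iff[OF cv] by (auto simp: less_le_trans)
qed

lemma cyl_children:
  assumes w: "w \<in> verts q"
  shows "cyl q w = (\<Union>c<q. cyl q (child w c))"
proof -
  have wv: "(fst w, snd w) \<in> verts q" using w by simp
  have "xi (fst w) < q" if "xi \<in> ends q" for xi using that by (simp add: ends_def)
  then show ?thesis using cyl_child_iff[OF w] cyl_iff[OF wv] by auto
qed

lemma cyl_children_disjoint: "w \<in> verts q \<Longrightarrow> disjoint_family_on (\<lambda>c. cyl q (child w c)) {..<q}"
  unfolding disjoint_family_on_def using cyl_child_iff by fastforce

lemma topspace_end_top: "0 < q \<Longrightarrow> topspace (end_top q) = ends q"
proof -
  assume q: "0 < q"
  have "\<Union>{{xi \<in> ends q. on_geo x xi} | x. x \<in> verts q} = ends q"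
  proof
    show "ends q \<subseteq> \<Union>{{xi \<in> ends q. on_geo x xi} | x. x \<in> verts q}"
    proof
      fix xi assume xi: "xi \<in> ends q"
      then have "xi \<in> {xi' \<in> ends q. on_geo (geo xi 0) xi'}" by (auto simp: on_geo_def)
      then show "xi \<in> \<Union>{{xi \<in> ends q. on_geo x xi} | x. x \<in> verts q}"
        using geo_in_verts[OF xi] by blast
    qed
  qed auto
  then show ?thesis by (simp add: end_top_def)
qed

lemma cyl_open: "x \<in> verts q \<Longrightarrow> openin (end_top q) (cyl q x)"
  unfolding end_top_def cyl_def by (rule topology_generated_by_Basis) blast

lemma openin_end_top_cyl_nhd:
  assumes "openin (end_top q) U" "xi \<in> U"
  shows "\<exists>x\<in>verts q. xi \<in> cyl q x \<and> cyl q x \<subseteq> U"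
proof -
  have "generate_topology_on {{xi \<in> ends q. on_geo x xi} | x. x \<in> verts q} U"
    using assms(1) by (simp add: end_top_def openin_topology_generated_by_iff)
  then show ?thesis using assms(2)
  proof (induction arbitrary: xi)
    case Empty then show ?case by simp
  next
    case (Int a b)
    have "xi \<in> a" "xi \<in> b" using Int.prems by auto
    then obtain x1 x2 where x: "x1 \<in> verts q" "xi \<in> cyl q x1" "cyl q x1 \<subseteq> a"
      "x2 \<in> verts q" "xi \<in> cyl q x2" "cyl q x2 \<subseteq> b" using Int.IH by metis
    have xi: "xi \<in> ends q" using x(2) by (simp add: cyl_def)
    define h where "h = max (fst x1) (fst x2)"
    have "cyl q (geo xi h) \<subseteq> cyl q x1" using cyl_geo_mono[OF xi, of "fst x1" h] cyl_geo[OF x(1,2)] by (simp add: h_def)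
    moreover have "cyl q (geo xi h) \<subseteq> cyl q x2" using cyl_geo_mono[OF xi, of "fst x2" h] cyl_geo[OF x(4,5)] by (simp add: h_def)
    ultimately have s: "cyl q (geo xi h) \<subseteq> a \<inter> b" using x(3,6) by blast
    show ?case using s in_cyl_geo[OF xi, of h] geo_in_verts[OF xi, of h] by blast
  next
    case (UN K)
    then obtain k where "k \<in> K" "xi \<in> k" by blast
    then show ?case using UN.IH by blast
  next
    case (Basis s)
    then obtain x where "x \<in> verts q" "s = cyl q x" by (auto simp: cyl_def)
    then show ?case using Basis.prems by blast
  qed
qed

lemma exists_end_along_children:
  assumes x0: "x0 \<in> verts q" and P0: "P x0"
    and step: "\<And>v. v \<in> verts q \<Longrightarrow> P v \<Longrightarrow> \<exists>c<q. P (child v c)"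
  shows "\<exists>xi\<in>cyl q x0. \<forall>n. P (geo xi (fst x0 + int n))"
proof -
  define choice where "choice v = (SOME c. c < q \<and> P (child v c))" for v
  define sq where "sq n = ((\<lambda>v. child v (choice v)) ^^ n) x0" for n
  have sq_Suc: "sq (Suc n) = child (sq n) (choice (sq n))" for n by (simp add: sq_def)
  have choice: "choice v < q \<and> P (child v (choice v))" if "v \<in> verts q" "P v" for v
    unfolding choice_def using step[OF that] by (rule someI_ex)
  have sq: "sq n \<in> verts q \<and> P (sq n) \<and> choice (sq n) < q" for n
  proof (induction n)
    case 0 show ?case using x0 P0 choice by (simp add: sq_def)
  next
    case (Suc n) then show ?case using choice child_in_verts by (simp add: sq_Suc)
  qed
  define xi where "xi i = (if i < fst x0 then snd x0 i else snd (sq (nat (i - fst x0) + 1)) i)" for i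
  have geo_sq: "geo xi (fst x0 + int n) = sq n" for n
  proof (induction n)
    case 0
    have "(\<lambda>i. if i < fst x0 then xi i else 0) = trunc_digits (snd x0) (fst x0)"
      by (auto simp: xi_def trunc_digits_def)
    then show ?case using trunc_digits_self[of "fst x0" "snd x0" q] x0 by (simp add: geo_def sq_def)
  next
    case (Suc n)
    have "fst (sq n) = fst x0 + int n" using arg_cong[OF Suc, of fst] by (simp add: geo_def)
    then have "xi (fst x0 + int n) = choice (sq n)" by (simp add: xi_def sq_Suc child_def)
    then show ?case unfolding sq_Suc Suc[symmetric] by (auto simp: geo_def child_def fun_eq_iff)
  qed
  have digits: "snd v i < q" if "v \<in> verts q" for v i using that by (cases v) (simp add: verts_def)
  obtain mm where mm: "\<forall>n<mm. snd x0 n = 0" using verts_eventually_zero[of "fst x0" "snd x0" q] x0 by auto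
  have "xi i < q" for i using digits[OF x0] digits[OF sq[THEN conjunct1]] by (simp add: xi_def)
  moreover have "\<forall>i<min mm (fst x0). xi i = 0" using mm by (simp add: xi_def)
  ultimately have "xi \<in> ends q" unfolding ends_def by blast
  then have "xi \<in> cyl q (geo xi (fst x0 + int 0))" by (rule in_cyl_geo)
  then have "xi \<in> cyl q x0" unfolding geo_sq by (simp add: sq_def)
  moreover have "\<forall>n. P (geo xi (fst x0 + int n))" using geo_sq sq by simp
  ultimately show ?thesis by blast
qed

lemma cyl_compact:
  assumes x0: "x0 \<in> verts q"
  shows "compactin (end_top q) (cyl q x0)"
  unfolding compactin_def
proof (intro conjI allI impI)
  show "cyl q x0 \<subseteq> topspace (end_top q)"
    using topspace_end_top[OF q_pos_of_verts[OF x0]] by (auto simp: cyl_def)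
  fix U assume U: "(\<forall>u\<in>U. openin (end_top q) u) \<and> cyl q x0 \<subseteq> \<Union>U"
  define covered where "covered v \<longleftrightarrow> (\<exists>F. finite F \<and> F \<subseteq> U \<and> cyl q v \<subseteq> \<Union>F)" for v
  show "\<exists>F. finite F \<and> F \<subseteq> U \<and> cyl q x0 \<subseteq> \<Union>F"
  proof (rule ccontr)
    assume "\<not> (\<exists>F. finite F \<and> F \<subseteq> U \<and> cyl q x0 \<subseteq> \<Union>F)"
    then have "\<not> covered x0" by (simp add: covered_def)
    moreover have "\<exists>c<q. \<not> covered (child v c)" if v: "v \<in> verts q" "\<not> covered v" for v
    proof (rule ccontr)
      assume "\<not> (\<exists>c<q. \<not> covered (child v c))"
      then obtain Fc where Fc: "\<forall>c<q. finite (Fc c) \<and> Fc c \<subseteq> U \<and> cyl q (child v c) \<subseteq> \<Union>(Fc c)"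
        unfolding covered_def by metis
      define F where "F = (\<Union>c<q. Fc c)"
      have "Fc c \<subseteq> F" if "c < q" for c using that unfolding F_def by blast
      then have "cyl q (child v c) \<subseteq> \<Union>F" if "c < q" for c
        using Fc that by (meson Sup_subset_mono order_trans)
      then have "cyl q v \<subseteq> \<Union>F" unfolding cyl_children[OF v(1)] by (simp add: UN_subset_iff)
      moreover have "finite F" "F \<subseteq> U" using Fc by (auto simp: F_def)
      ultimately show False using v(2) unfolding covered_def by blast
    qed
    ultimately obtain xi where xi: "xi \<in> cyl q x0" and bad: "\<And>n. \<not> covered (geo xi (fst x0 + int n))"
      using exists_end_along_children[OF x0, of "\<lambda>v. \<not> covered v"] by blast
    have xiq: "xi \<in> ends q" using xi by (simp add: cyl_def)
    obtain u where u: "u \<in> U" "xi \<in> u" using xi U by blast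
    then obtain y where y: "y \<in> verts q" "xi \<in> cyl q y" "cyl q y \<subseteq> u"
      using openin_end_top_cyl_nhd U by meson
    define n where "n = nat (fst y - fst x0)"
    have "cyl q (geo xi (fst x0 + int n)) \<subseteq> cyl q y"
      using cyl_geo_mono[OF xiq, of "fst y" "fst x0 + int n"] cyl_geo[OF y(1,2)] by (simp add: n_def)
    then have "covered (geo xi (fst x0 + int n))"
      using u y unfolding covered_def by (intro exI[of _ "{u}"]) auto
    then show False using bad by blast
  qed
qed

lemma countable_verts: "countable (verts q)"
proof -
  define F where "F = (\<lambda>(h::int, m::int, l::nat list). (h, \<lambda>n. if m \<le> n \<and> n < m + int (length l) then l ! nat (n - m) else 0))"
  have "verts q \<subseteq> range F"
  proof
    fix x assume x: "x \<in> verts q"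
    obtain h f where e: "x = (h, f)" by (cases x)
    have xv: "(h, f) \<in> verts q" using x e by simp
    obtain m0 where m0: "\<forall>n<m0. f n = 0" using verts_eventually_zero[OF xv] by blast
    define mm where "mm = min m0 h"
    define l where "l = map (\<lambda>i. f (mm + int i)) [0..<nat (h - mm)]"
    have len: "int (length l) = h - mm" by (simp add: l_def mm_def)
    have "F (h, mm, l) = (h, f)"
    proof -
      have "(if mm \<le> n \<and> n < mm + int (length l) then l ! nat (n - mm) else 0) = f n" for n
      proof (cases "mm \<le> n \<and> n < mm + int (length l)")
        case True
        then have "nat (n - mm) < nat (h - mm)" using len by linarith
        then show ?thesis using True by (simp add: l_def)
      next
        case False
        then have "n < m0 \<or> n \<ge> h" using len by (auto simp: mm_def)
        then show ?thesis using False m0 xv by (auto simp: verts_def)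
      qed
      then show ?thesis by (simp add: F_def fun_eq_iff)
    qed
    then show "x \<in> range F" using e by (metis rangeI)
  qed
  moreover have "countable (range F)" by simp
  ultimately show ?thesis by (rule countable_subset)
qed

lemma borel_sets_end_top_eq:
  assumes q: "0 < q"
  shows "borel_sets_of (end_top q) = sigma_sets (ends q) (insert {} {cyl q x | x. x \<in> verts q})"
  unfolding borel_sets_of_def topspace_end_top[OF q]
proof (rule sigma_sets_eqI)
  fix U assume "U \<in> {U. openin (end_top q) U}"
  then have U: "openin (end_top q) U" by simp
  define C where "C = {x \<in> verts q. cyl q x \<subseteq> U}"
  have "U = \<Union>(cyl q ` C)"
  proof
    show "U \<subseteq> \<Union>(cyl q ` C)"
    proof
      fix xi assume "xi \<in> U"
      then obtain x where "x \<in> verts q" "xi \<in> cyl q x" "cyl q x \<subseteq> U" using openin_end_top_cyl_nhd[OF U] by blast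
      then show "xi \<in> \<Union>(cyl q ` C)" unfolding C_def by blast
    qed
    show "\<Union>(cyl q ` C) \<subseteq> U" by (auto simp: C_def)
  qed
  moreover have "\<Union>(cyl q ` C) \<in> sigma_sets (ends q) (insert {} {cyl q x | x. x \<in> verts q})"
  proof (rule sigma_sets_UNION)
    have "countable C" by (rule countable_subset[OF _ countable_verts]) (auto simp: C_def)
    then show "countable (cyl q ` C)" by simp
    show "b \<in> sigma_sets (ends q) (insert {} {cyl q x | x. x \<in> verts q})" if "b \<in> cyl q ` C" for b
      using that by (auto simp: C_def intro!: sigma_sets.Basic)
  qed
  ultimately show "U \<in> sigma_sets (ends q) (insert {} {cyl q x | x. x \<in> verts q})" by simp
next
  fix b assume "b \<in> insert {} {cyl q x | x. x \<in> verts q}"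
  then show "b \<in> sigma_sets (ends q) {U. openin (end_top q) U}"
    by (auto intro!: sigma_sets.Basic cyl_open sigma_sets.Empty)
qed

lemma Int_stable_cyl: "Int_stable (insert {} {cyl q x | x. x \<in> verts q})"
  unfolding Int_stable_def
proof (intro ballI)
  fix A B assume A: "A \<in> insert {} {cyl q x | x. x \<in> verts q}" and B: "B \<in> insert {} {cyl q x | x. x \<in> verts q}"
  show "A \<inter> B \<in> insert {} {cyl q x | x. x \<in> verts q}"
  proof (cases "A \<inter> B = {}")
    case False
    then obtain x y where xy: "x \<in> verts q" "y \<in> verts q" "A = cyl q x" "B = cyl q y" using A B by auto
    obtain xi where xi: "xi \<in> cyl q x" "xi \<in> cyl q y" using False xy by auto
    have xe: "xi \<in> ends q" using xi by (simp add: cyl_def)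
    have gx: "x = geo xi (fst x)" and gy: "y = geo xi (fst y)" using cyl_geo xy xi by blast+
    show ?thesis
    proof (cases "fst x \<le> fst y")
      case True
      then have "cyl q y \<subseteq> cyl q x" using cyl_geo_mono[OF xe True] gx gy by simp
      then have "A \<inter> B = cyl q y" using xy by auto
      then show ?thesis using xy(2) by blast
    next
      case False
      then have "cyl q x \<subseteq> cyl q y" using cyl_geo_mono[OF xe, of "fst y" "fst x"] gx gy by simp
      then have "A \<inter> B = cyl q x" using xy by auto
      then show ?thesis using xy(1) by blast
    qed
  qed simp
qed

lemma finite_digit_functions: "finite {f :: int \<Rightarrow> nat. \<forall>n. f n < q \<and> (n < lo \<or> n \<ge> hi \<longrightarrow> f n = 0)}"
proof (rule finite_subset)
  show "{f :: int \<Rightarrow> nat. \<forall>n. f n < q \<and> (n < lo \<or> n \<ge> hi \<longrightarrow> f n = 0)}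
      \<subseteq> (\<lambda>g n. if n \<in> {lo..<hi} then g n else 0) ` (PiE {lo..<hi} (\<lambda>_. {..<q}))"
  proof
    fix f assume f: "f \<in> {f :: int \<Rightarrow> nat. \<forall>n. f n < q \<and> (n < lo \<or> n \<ge> hi \<longrightarrow> f n = 0)}"
    have "f = (\<lambda>n. if n \<in> {lo..<hi} then restrict f {lo..<hi} n else 0)"
      using f by (auto simp: fun_eq_iff)
    moreover have "restrict f {lo..<hi} \<in> PiE {lo..<hi} (\<lambda>_. {..<q})" using f by auto
    ultimately show "f \<in> (\<lambda>g n. if n \<in> {lo..<hi} then g n else 0) ` (PiE {lo..<hi} (\<lambda>_. {..<q}))" by blast
  qed
  show "finite ((\<lambda>g n. if n \<in> {lo..<hi} then g n else 0) ` (PiE {lo..<hi} (\<lambda>_. {..<q})))"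
    by (intro finite_imageI finite_PiE) auto
qed

section \<open>Two families of automorphisms: subtree swaps and translations\<close>

lemma transpose_less: "a < q \<Longrightarrow> b < q \<Longrightarrow> d < q \<Longrightarrow> Transposition.transpose a b d < q"
  by (simp add: Transposition.transpose_def)

definition strict_anc :: "vtx \<Rightarrow> vtx \<Rightarrow> bool" where
  "strict_anc w x \<longleftrightarrow> fst x > fst w \<and> (\<forall>n<fst w. snd x n = snd w n)"

text \<open>\<open>swap_below q w a b\<close> exchanges the subtrees rooted at \<open>child w a\<close> and \<open>child w b\<close>
by transposing the digit at level \<open>fst w\<close>; \<open>swap_below_end\<close> is its action on ends.\<close>

definition swap_below :: "nat \<Rightarrow> vtx \<Rightarrow> nat \<Rightarrow> nat \<Rightarrow> vtx \<Rightarrow> vtx" where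
  "swap_below q w a b x = (if x \<in> verts q \<and> strict_anc w x then (fst x, (snd x)(fst w := Transposition.transpose a b (snd x (fst w)))) else x)"

definition swap_below_end :: "vtx \<Rightarrow> nat \<Rightarrow> nat \<Rightarrow> bend \<Rightarrow> bend" where
  "swap_below_end w a b xi = (if (\<forall>n<fst w. xi n = snd w n) then xi(fst w := Transposition.transpose a b (xi (fst w))) else xi)"

context
  fixes q :: nat and w :: vtx and a b :: nat
  assumes ab: "a < q" "b < q"
begin

lemma swap_below_in_verts: "x \<in> verts q \<Longrightarrow> swap_below q w a b x \<in> verts q"
proof -
  assume x: "x \<in> verts q"
  obtain h f where e: "x = (h, f)" by (cases x)
  obtain m where m: "\<forall>n<m. f n = 0" using verts_eventually_zero x e by blast
  show ?thesis
  proof (cases "strict_anc w x")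
    case True
    then have "fst w < h" by (simp add: strict_anc_def e)
    then show ?thesis using x m ab True unfolding swap_below_def e verts_def
      by (auto intro!: exI[of _ "min m (fst w)"] transpose_less)
  qed (use x in \<open>simp add: swap_below_def\<close>)
qed

lemma strict_anc_swap_below: "strict_anc w (swap_below q w a b x) \<longleftrightarrow> strict_anc w x"
  by (auto simp: swap_below_def strict_anc_def)

lemma swap_below_swap_below: "swap_below q w a b (swap_below q w a b x) = x"
proof (cases "x \<in> verts q \<and> strict_anc w x")
  case True
  then have "swap_below q w a b x \<in> verts q" "strict_anc w (swap_below q w a b x)" using swap_below_in_verts strict_anc_swap_below by auto
  then show ?thesis using True by (simp add: swap_below_def fun_eq_iff)
next
  case False
  then have "swap_below q w a b x = x" unfolding swap_below_def by (rule if_not_P)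
  then show ?thesis by simp
qed

lemma swap_below_pred: "x \<in> verts q \<Longrightarrow> swap_below q w a b (pred x) = pred (swap_below q w a b x)"
proof -
  assume x: "x \<in> verts q"
  obtain h f where e: "x = (h, f)" by (cases x)
  have px: "pred x \<in> verts q" using pred_in_verts[OF x] .
  show ?thesis
  proof (cases "strict_anc w x")
    case True
    show ?thesis
    proof (cases "h - 1 > fst w")
      case True
      then have "strict_anc w (pred x)" using \<open>strict_anc w x\<close> by (auto simp: strict_anc_def pred_def e)
      then show ?thesis using True \<open>strict_anc w x\<close> x px by (auto simp: swap_below_def pred_def e fun_eq_iff)
    next
      case False
      then have "h - 1 = fst w" "\<not> strict_anc w (pred x)" using \<open>strict_anc w x\<close> by (auto simp: strict_anc_def pred_def e)
      then show ?thesis using \<open>strict_anc w x\<close> x px by (auto simp: swap_below_def pred_def e fun_eq_iff)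
    qed
  next
    case False
    have "\<not> strict_anc w (pred x)"
    proof
      assume pp: "strict_anc w (pred x)"
      then have "h - 1 > fst w" "\<forall>n<fst w. (f(h - 1 := 0)) n = snd w n" by (auto simp: strict_anc_def pred_def e)
      then have "\<forall>n<fst w. f n = snd w n" by (metis fun_upd_other less_trans order.irrefl)
      then have "strict_anc w x" using \<open>h - 1 > fst w\<close> by (auto simp: strict_anc_def e)
      then show False using False by simp
    qed
    then show ?thesis using False by (simp add: swap_below_def)
  qed
qed

lemma swap_below_Aff: "swap_below q w a b \<in> Aff q"
  unfolding Aff_def
proof (intro CollectI conjI ballI allI impI)
  show "bij_betw (swap_below q w a b) (verts q) (verts q)"
    by (rule bij_betw_byWitness[where f'="swap_below q w a b"]) (auto simp: swap_below_swap_below swap_below_in_verts)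
  show "\<And>x. x \<in> verts q \<Longrightarrow> swap_below q w a b (pred x) = pred (swap_below q w a b x)" by (rule swap_below_pred)
  show "\<And>x. x \<notin> verts q \<Longrightarrow> swap_below q w a b x = x" by (simp add: swap_below_def)
qed

lemma swap_below_end_in_ends: "xi \<in> ends q \<Longrightarrow> swap_below_end w a b xi \<in> ends q"
proof -
  assume xi: "xi \<in> ends q"
  obtain m where m: "\<forall>n<m. xi n = 0" using ends_eventually_zero xi by blast
  show ?thesis using xi m ab unfolding swap_below_end_def ends_def
    by (auto intro!: exI[of _ "min m (fst w)"] transpose_less)
qed

lemma act_end_swap_below: assumes xi: "xi \<in> ends q" shows "act_end q (swap_below q w a b) xi = swap_below_end w a b xi"
proof (rule act_end_unique[OF swap_below_Aff xi])
  show "\<forall>x\<in>verts q. on_geo x xi \<longrightarrow> on_geo (swap_below q w a b x) (swap_below_end w a b xi)"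
  proof (intro ballI impI)
    fix x assume x: "x \<in> verts q" and og: "on_geo x xi"
    obtain h f where e: "x = (h, f)" by (cases x)
    have xv: "(h, f) \<in> verts q" using x e by simp
    have agr: "\<forall>n<h. xi n = f n" using og on_geo_iff[OF xv] e by simp
    have tv: "swap_below q w a b (h, f) \<in> verts q" using swap_below_in_verts xv by blast
    show "on_geo (swap_below q w a b x) (swap_below_end w a b xi)"
    proof (cases "strict_anc w x")
      case True
      then have "fst w < h" "\<forall>n<fst w. f n = snd w n" by (auto simp: strict_anc_def e)
      then have aw: "\<forall>n<fst w. xi n = snd w n" using agr by auto
      have tx: "swap_below q w a b x = (h, f(fst w := Transposition.transpose a b (f (fst w))))" using True x e by (simp add: swap_below_def)
      have tv': "(h, f(fst w := Transposition.transpose a b (f (fst w)))) \<in> verts q" using tv tx e by simp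
      show ?thesis unfolding tx on_geo_iff[OF tv'] using aw agr \<open>fst w < h\<close> by (simp add: swap_below_end_def)
    next
      case False
      have tx: "swap_below q w a b (h, f) = (h, f)" using False by (simp add: swap_below_def e)
      show ?thesis
      proof (cases "h \<le> fst w")
        case True
        then show ?thesis using agr tx e xv by (auto simp: on_geo_iff swap_below_end_def)
      next
        case False
        then have "\<not> (\<forall>n<fst w. f n = snd w n)" using \<open>\<not> strict_anc w x\<close> by (auto simp: strict_anc_def e)
        then have "\<not> (\<forall>n<fst w. xi n = snd w n)" using agr False by auto
        then have "swap_below_end w a b xi = xi" unfolding swap_below_end_def by meson
        then show ?thesis using og tx e by simp
      qed
    qed
  qed
qed

end

lemma swap_below_end_cyl_child:
  assumes ab: "a < q" "b < q" and w: "w \<in> verts q" and xi: "xi \<in> ends q"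
  shows "swap_below_end w a b xi \<in> cyl q (child w a) \<longleftrightarrow> xi \<in> cyl q (child w b)"
  using swap_below_end_in_ends[OF ab xi] xi
  unfolding cyl_child_iff[OF w ab(1)] cyl_child_iff[OF w ab(2)]
  by (auto simp: swap_below_end_def Transposition.transpose_def split: if_splits)


lemma strict_anc_root_iff:
  assumes w: "w \<in> verts q"
  shows "strict_anc w root \<longleftrightarrow> (\<exists>r\<ge>1. w = root_anc r)"
proof
  obtain h f where e: "w = (h, f)" by (cases w)
  assume a: "strict_anc w root"
  have "f n = 0" for n using a w e by (cases "n < h") (auto simp: strict_anc_def root_def verts_def)
  moreover have "h < 0" using a e by (simp add: strict_anc_def root_def)
  ultimately show "\<exists>r\<ge>1. w = root_anc r"
    using e by (intro exI[of _ "nat (- h)"]) (auto simp: root_anc_def fun_eq_iff)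
qed (auto simp: strict_anc_def root_def root_anc_def)

lemma swap_below_root:
  assumes "\<not> strict_anc w root \<or> (a \<noteq> 0 \<and> b \<noteq> 0)"
  shows "swap_below q w a b root = root"
  using assms by (auto simp: swap_below_def root_def Transposition.transpose_def fun_eq_iff)

text \<open>\<open>shift_to q x0\<close> is an automorphism mapping \<open>o\<close> to \<open>x0\<close>: it shifts the horocycle index by
\<open>fst x0\<close> and adds the digits of \<open>x0\<close> modulo \<open>q\<close>; \<open>shift_from q x0\<close> is its inverse.\<close>

definition shift_to :: "nat \<Rightarrow> vtx \<Rightarrow> vtx \<Rightarrow> vtx" where
  "shift_to q x0 y = (if y \<in> verts q then
     (fst y + fst x0, \<lambda>n. if n < fst y + fst x0 then (snd y (n - fst x0) + snd x0 n) mod q else 0) else y)"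

definition shift_from :: "nat \<Rightarrow> vtx \<Rightarrow> vtx \<Rightarrow> vtx" where
  "shift_from q x0 y = (if y \<in> verts q then
     (fst y - fst x0, \<lambda>n. if n < fst y - fst x0 then (snd y (n + fst x0) + (q - snd x0 (n + fst x0))) mod q else 0) else y)"

context
  fixes q :: nat and x0 :: vtx
  assumes x0: "x0 \<in> verts q"
begin

private lemma q_pos: "0 < q" using q_pos_of_verts[OF x0] .

private lemma x0_low: "\<exists>m. \<forall>n<m. snd x0 n = 0" using x0 by (cases x0) (auto simp: verts_def)

private lemma x0_dig: "snd x0 n < q" using x0 by (cases x0) (auto simp: verts_def)

private lemma x0_high: "n \<ge> fst x0 \<Longrightarrow> snd x0 n = 0" using x0 by (cases x0) (auto simp: verts_def)

lemma shift_to_in_verts: "y \<in> verts q \<Longrightarrow> shift_to q x0 y \<in> verts q"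
proof -
  assume y: "y \<in> verts q"
  obtain h f where e: "y = (h, f)" by (cases y)
  obtain m1 where m1: "\<forall>n<m1. f n = 0" using verts_eventually_zero y e by blast
  obtain m2 where m2: "\<forall>n<m2. snd x0 n = 0" using x0_low by blast
  have "\<forall>n<min (m1 + fst x0) m2. (f (n - fst x0) + snd x0 n) mod q = 0" using m1 m2 by auto
  then show ?thesis using y q_pos unfolding shift_to_def e verts_def
    by (auto intro!: exI[of _ "min (min (m1 + fst x0) m2) (h + fst x0)"])
qed

lemma shift_from_in_verts: "y \<in> verts q \<Longrightarrow> shift_from q x0 y \<in> verts q"
proof -
  assume y: "y \<in> verts q"
  obtain h f where e: "y = (h, f)" by (cases y)
  obtain m1 where m1: "\<forall>n<m1. f n = 0" using verts_eventually_zero y e by blast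
  obtain m2 where m2: "\<forall>n<m2. snd x0 n = 0" using x0_low by blast
  have "\<forall>n<min (m1 - fst x0) (m2 - fst x0). (f (n + fst x0) + (q - snd x0 (n + fst x0))) mod q = 0"
    using m1 m2 by auto
  then show ?thesis using y q_pos unfolding shift_from_def e verts_def
    by (auto intro!: exI[of _ "min (min (m1 - fst x0) (m2 - fst x0)) (h - fst x0)"])
qed

lemma shift_from_shift_to: "shift_from q x0 (shift_to q x0 y) = y"
proof (cases "y \<in> verts q")
  case True
  obtain h f where e: "y = (h, f)" by (cases y)
  have yv: "(h, f) \<in> verts q" using True e by simp
  have tv: "shift_to q x0 y \<in> verts q" using shift_to_in_verts True by blast
  have fd: "f n < q" for n using yv by (simp add: verts_def)
  have fz: "n \<ge> h \<Longrightarrow> f n = 0" for n using yv by (simp add: verts_def)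
  have d: "(((f n + snd x0 (n + fst x0)) mod q) + (q - snd x0 (n + fst x0))) mod q = f n" for n
  proof -
    have "(((f n + snd x0 (n + fst x0)) mod q) + (q - snd x0 (n + fst x0))) mod q
        = ((f n + snd x0 (n + fst x0)) + (q - snd x0 (n + fst x0))) mod q" by (simp add: mod_add_left_eq)
    also have "\<dots> = (f n + q) mod q" using x0_dig[of "n + fst x0"] by simp
    also have "\<dots> = f n" using fd[of n] by simp
    finally show ?thesis .
  qed
  show ?thesis using tv True d fz unfolding e shift_from_def
    by (auto simp: shift_to_def fun_eq_iff not_less)
next
  case False
  then show ?thesis using shift_to_in_verts by (simp add: shift_to_def shift_from_def)
qed

lemma shift_to_shift_from: "shift_to q x0 (shift_from q x0 y) = y"
proof (cases "y \<in> verts q")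
  case True
  obtain h f where e: "y = (h, f)" by (cases y)
  have yv: "(h, f) \<in> verts q" using True e by simp
  have sv: "shift_from q x0 y \<in> verts q" using shift_from_in_verts True by blast
  have fd: "f n < q" for n using yv by (simp add: verts_def)
  have fz: "n \<ge> h \<Longrightarrow> f n = 0" for n using yv by (simp add: verts_def)
  have d: "((f n + (q - snd x0 n)) mod q + snd x0 n) mod q = f n" for n
  proof -
    have "((f n + (q - snd x0 n)) mod q + snd x0 n) mod q = ((f n + (q - snd x0 n)) + snd x0 n) mod q"
      by (simp add: mod_add_left_eq)
    also have "\<dots> = (f n + q) mod q" using x0_dig[of n] by simp
    also have "\<dots> = f n" using fd[of n] by simp
    finally show ?thesis .
  qed
  show ?thesis using sv True d fz unfolding e shift_to_def
    by (auto simp: shift_from_def fun_eq_iff not_less)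
next
  case False
  then show ?thesis using shift_from_in_verts by (simp add: shift_to_def shift_from_def)
qed

lemma shift_to_pred: "y \<in> verts q \<Longrightarrow> shift_to q x0 (pred y) = pred (shift_to q x0 y)"
proof -
  assume y: "y \<in> verts q"
  obtain h f where e: "y = (h, f)" by (cases y)
  have pv: "pred y \<in> verts q" using pred_in_verts[OF y] .
  have tv: "shift_to q x0 y \<in> verts q" using shift_to_in_verts[OF y] .
  show ?thesis using y pv unfolding e
    by (auto simp: shift_to_def pred_def fun_eq_iff)
qed

lemma shift_to_Aff: "shift_to q x0 \<in> Aff q"
  unfolding Aff_def
proof (intro CollectI conjI ballI allI impI)
  show "bij_betw (shift_to q x0) (verts q) (verts q)"
    by (rule bij_betw_byWitness[where f'="shift_from q x0"]) (auto simp: shift_from_shift_to shift_to_shift_from shift_to_in_verts shift_from_in_verts)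
  show "\<And>x. x \<in> verts q \<Longrightarrow> shift_to q x0 (pred x) = pred (shift_to q x0 x)" by (rule shift_to_pred)
  show "\<And>x. x \<notin> verts q \<Longrightarrow> shift_to q x0 x = x" by (simp add: shift_to_def)
qed

lemma shift_from_Aff: "shift_from q x0 \<in> Aff q"
  unfolding Aff_def
proof (intro CollectI conjI ballI allI impI)
  show "bij_betw (shift_from q x0) (verts q) (verts q)"
    by (rule bij_betw_byWitness[where f'="shift_to q x0"]) (auto simp: shift_from_shift_to shift_to_shift_from shift_to_in_verts shift_from_in_verts)
  show "shift_from q x0 (pred x) = pred (shift_from q x0 x)" if x: "x \<in> verts q" for x
  proof -
    have sx: "shift_from q x0 x \<in> verts q" using shift_from_in_verts[OF x] .
    have "shift_from q x0 (pred x) = shift_from q x0 (pred (shift_to q x0 (shift_from q x0 x)))" by (simp add: shift_to_shift_from)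
    also have "\<dots> = shift_from q x0 (shift_to q x0 (pred (shift_from q x0 x)))" using shift_to_pred[OF sx] by simp
    also have "\<dots> = pred (shift_from q x0 x)" by (simp add: shift_from_shift_to)
    finally show ?thesis .
  qed
  show "\<And>x. x \<notin> verts q \<Longrightarrow> shift_from q x0 x = x" by (simp add: shift_from_def)
qed

lemma shift_to_root: "shift_to q x0 root = x0"
proof -
  have "root \<in> verts q" using root_in_verts[OF q_pos] .
  then show ?thesis using x0_dig x0_high
    by (cases x0) (auto simp: shift_to_def root_def fun_eq_iff not_less)
qed

end

section \<open>Integration against a measure-preserving involution\<close>

text \<open>No measurability of \<open>f\<close> is required below: \<open>L\<close> maps the simple functions below \<open>f \<circ> L\<close>
onto those below \<open>f\<close> without changing their integrals.\<close>

lemma simple_integral_invol: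
  assumes L: "L \<in> measurable M M" and inv: "\<forall>x\<in>space M. L (L x) = x"
    and pres: "\<forall>A\<in>sets M. emeasure M (L -` A \<inter> space M) = emeasure M A"
    and g: "simple_function M g"
  shows "integral\<^sup>S M (\<lambda>x. g (L x)) = integral\<^sup>S M g"
proof -
  have Ls: "L x \<in> space M" if "x \<in> space M" for x using L that by (auto simp: measurable_def)
  have img: "(\<lambda>x. g (L x)) ` space M = g ` space M"
  proof
    show "g ` space M \<subseteq> (\<lambda>x. g (L x)) ` space M"
    proof
      fix y assume "y \<in> g ` space M"
      then obtain x where x: "x \<in> space M" "y = g (L (L x))" using inv by auto
      then show "y \<in> (\<lambda>x. g (L x)) ` space M" using Ls[OF x(1)] by blast
    qed
  qed (use Ls in auto)
  have pre: "emeasure M ((\<lambda>x. g (L x)) -` {y} \<inter> space M) = emeasure M (g -` {y} \<inter> space M)" for y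
  proof -
    have "(\<lambda>x. g (L x)) -` {y} \<inter> space M = L -` (g -` {y} \<inter> space M) \<inter> space M" using Ls by auto
    moreover have "g -` {y} \<inter> space M \<in> sets M" using g by (rule simple_functionD(2))
    ultimately show ?thesis using pres by metis
  qed
  show ?thesis unfolding simple_integral_def img pre ..
qed

lemma nn_integral_invol_le:
  assumes L: "L \<in> measurable M M" and inv: "\<forall>x\<in>space M. L (L x) = x"
    and pres: "\<forall>A\<in>sets M. emeasure M (L -` A \<inter> space M) = emeasure M A"
  shows "(\<integral>\<^sup>+x. f (L x) \<partial>M) \<le> integral\<^sup>N M f"
  unfolding nn_integral_def
proof (rule SUP_least)
  fix g assume g: "g \<in> {g. simple_function M g \<and> g \<le> (\<lambda>x. f (L x))}"
  define g' where "g' x = (if x \<in> space M then g (L x) else 0)" for x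
  have sg: "simple_function M g" using g by auto
  have sg': "simple_function M g'"
    using simple_function_comp[OF L sg] by (subst simple_function_cong[of _ g' "\<lambda>x. g (L x)"]) (auto simp: g'_def)
  have "g' \<le> f"
  proof (rule le_funI)
    fix x show "g' x \<le> f x"
    proof (cases "x \<in> space M")
      case True
      then have "g (L x) \<le> f (L (L x))" using g by (auto simp: le_fun_def)
      then show ?thesis using True inv by (simp add: g'_def)
    qed (simp add: g'_def)
  qed
  moreover have "integral\<^sup>S M g' = integral\<^sup>S M (\<lambda>x. g (L x))"
    by (rule simple_integral_cong) (simp add: g'_def)
  ultimately show "integral\<^sup>S M g \<le> (SUP g\<in>{g. simple_function M g \<and> g \<le> f}. integral\<^sup>S M g)"
    using sg' simple_integral_invol[OF L inv pres sg] by (metis (mono_tags, lifting) SUP_upper mem_Collect_eq)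
qed

lemma nn_integral_invol:
  assumes L: "L \<in> measurable M M" and inv: "\<forall>x\<in>space M. L (L x) = x"
    and pres: "\<forall>A\<in>sets M. emeasure M (L -` A \<inter> space M) = emeasure M A"
  shows "(\<integral>\<^sup>+x. f (L x) \<partial>M) = integral\<^sup>N M f"
proof (rule antisym)
  show "(\<integral>\<^sup>+x. f (L x) \<partial>M) \<le> integral\<^sup>N M f" by (rule nn_integral_invol_le[OF assms])
  have "integral\<^sup>N M f = (\<integral>\<^sup>+x. f (L (L x)) \<partial>M)" using inv by (intro nn_integral_cong) simp
  also have "\<dots> \<le> (\<integral>\<^sup>+x. f (L x) \<partial>M)" by (rule nn_integral_invol_le[OF assms])
  finally show "integral\<^sup>N M f \<le> (\<integral>\<^sup>+x. f (L x) \<partial>M)" .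
qed

lemma continuous_map_measurable_borel_sets_of:
  assumes "continuous_map T T f" "sets M = borel_sets_of T" "space M = topspace T"
  shows "f \<in> measurable M M"
proof (rule measurable_sigma_sets[of M "topspace T" "{U. openin T U}"])
  show "sets M = sigma_sets (topspace T) {U. openin T U}" using assms by (simp add: borel_sets_of_def)
  show "{U. openin T U} \<subseteq> Pow (topspace T)" by (auto dest: openin_subset)
  show "f \<in> space M \<rightarrow> topspace T" using assms(1,3) by (auto simp: continuous_map_def)
  fix U assume "U \<in> {U. openin T U}"
  moreover have "{x \<in> topspace T. f x \<in> U} = f -` U \<inter> topspace T" by auto
  ultimately have "openin T (f -` U \<inter> topspace T)" using assms(1) openin_continuous_map_preimage by fastforce
  then show "f -` U \<inter> space M \<in> sets M" using assms(2,3) by (simp add: borel_sets_of_def sigma_sets.Basic)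
qed

lemma openin_in_borel_sets_of: "openin T U \<Longrightarrow> U \<in> borel_sets_of T"
  by (simp add: borel_sets_of_def sigma_sets.Basic)
section \<open>Explicit masses of cylinders and spheres\<close>

definition cyl_mass :: "(nat \<Rightarrow> ennreal) \<Rightarrow> nat \<Rightarrow> nat \<Rightarrow> nat \<Rightarrow> ennreal" where
  "cyl_mass A q r d = (if d = 0 then (\<Sum>i\<le>r. A i) else if r = 0 then A 0 * ennreal (1 / real q ^ d)
      else A r * ennreal (1 / ((real q - 1) * real q ^ (d - 1))))"

lemma cyl_mass_Suc_off_ray:
  assumes q: "q \<ge> 2" and rd: "r = 0 \<or> d \<noteq> 0"
  shows "cyl_mass A q r (Suc d) = cyl_mass A q r d * ennreal (1 / real q)"
proof -
  have "0 < real q - 1" using q by simp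
  then show ?thesis using rd
    by (cases d) (auto simp: cyl_mass_def mult.assoc ennreal_mult[symmetric] mult_ac)
qed

text \<open>For a vertex \<open>y\<close> with \<open>up(o, y) = r\<close> and \<open>up(y, o) = k\<close>, the \<open>i\<close>-th ancestor of \<open>y\<close> has
\<open>up(o, -) = (if i \<le> k then r else r + i - k)\<close> and \<open>up(-, o) = k - i\<close>.  This gives the masses of its
cylinder and of the sphere \<open>\<Omega>\<^sub>j(y)\<close> = cylinder of the \<open>j\<close>-th ancestor minus that of the \<open>(j-1)\<close>-th.\<close>

definition anc_cyl_mass :: "(nat \<Rightarrow> ennreal) \<Rightarrow> nat \<Rightarrow> nat \<Rightarrow> nat \<Rightarrow> nat \<Rightarrow> ennreal" where
  "anc_cyl_mass A q r k i = cyl_mass A q (if i \<le> k then r else r + i - k) (k - i)"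

definition sphere_mass :: "(nat \<Rightarrow> ennreal) \<Rightarrow> nat \<Rightarrow> nat \<Rightarrow> nat \<Rightarrow> nat \<Rightarrow> ennreal" where
  "sphere_mass A q r k j =
    (if j = 0 then anc_cyl_mass A q r k 0 else anc_cyl_mass A q r k j - anc_cyl_mass A q r k (j - 1))"

lemma sphere_mass_0_0: "sphere_mass A q r 0 0 = (\<Sum>i\<le>r. A i)"
  by (simp add: sphere_mass_def anc_cyl_mass_def cyl_mass_def)

lemma sphere_mass_0_Suc_0: "sphere_mass A q 0 (Suc k) 0 = A 0 * ennreal (1 / real q ^ Suc k)"
  by (simp add: sphere_mass_def anc_cyl_mass_def cyl_mass_def)

lemma sphere_mass_Suc_Suc_0:
  "sphere_mass A q (Suc r) (Suc k) 0 = A (Suc r) * ennreal (1 / ((real q - 1) * real q ^ k))"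
  by (simp add: sphere_mass_def anc_cyl_mass_def cyl_mass_def)

context
  fixes A :: "nat \<Rightarrow> ennreal" and q :: nat
  assumes q2: "q \<ge> 2" and A_fin: "\<And>i. A i \<noteq> top"
begin

lemma sphere_mass_less:
  assumes "k < j"
  shows "sphere_mass A q r k j = A (j + r - k)"
proof -
  define n where "n = r + j - 1 - k"
  have n: "j + r - k = Suc n" using assms by (simp add: n_def)
  have "anc_cyl_mass A q r k j = (\<Sum>i\<le>Suc n. A i)"
    using assms n by (simp add: anc_cyl_mass_def cyl_mass_def add.commute)
  moreover have "anc_cyl_mass A q r k (j - 1) = (\<Sum>i\<le>n. A i)"
  proof (cases "j = Suc k")
    case False
    then have "\<not> j - 1 \<le> k" "r + (j - 1) - k = n" using assms by (auto simp: n_def)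
    then show ?thesis by (simp add: anc_cyl_mass_def cyl_mass_def)
  qed (simp add: anc_cyl_mass_def cyl_mass_def n_def)
  ultimately show ?thesis using assms A_fin n by (simp add: sphere_mass_def)
qed

lemma sphere_mass_greater:
  assumes "j \<ge> 1"
  shows "sphere_mass A q (Suc r) (j + 1 + k) j = A (Suc r) * ennreal (1 / real q ^ Suc k)"
proof -
  have Q: "real q \<ge> 2" using q2 by simp
  have "anc_cyl_mass A q (Suc r) (j + 1 + k) j = A (Suc r) * ennreal (1 / ((real q - 1) * real q ^ k))"
    by (simp add: anc_cyl_mass_def cyl_mass_def)
  moreover have "anc_cyl_mass A q (Suc r) (j + 1 + k) (j - 1) =
      A (Suc r) * ennreal (1 / ((real q - 1) * real q ^ Suc k))"
  proof -
    have "j - 1 \<le> j + 1 + k" "j + 1 + k - (j - 1) = Suc (Suc k)" using assms by auto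
    then show ?thesis unfolding anc_cyl_mass_def cyl_mass_def by (simp del: power_Suc)
  qed
  moreover have "1 / ((real q - 1) * real q ^ k) - 1 / ((real q - 1) * real q ^ Suc k) = 1 / real q ^ Suc k"
  proof -
    define X where "X = (real q - 1) * real q ^ k"
    have "X > 0" using Q by (simp add: X_def)
    then have "1 / X - 1 / (X * real q) = (real q - 1) / (X * real q)" using Q by (simp add: field_simps)
    also have "\<dots> = 1 / real q ^ Suc k" using Q by (simp add: X_def)
    finally show ?thesis by (simp add: X_def mult_ac)
  qed
  ultimately show ?thesis using assms Q A_fin
    by (simp add: sphere_mass_def ennreal_right_diff_distrib[symmetric] ennreal_minus del: power_Suc)
qed

lemma sphere_mass_greater_0:
  assumes "j \<ge> 1"
  shows "sphere_mass A q 0 (j + k) j = ennreal ((real q - 1) / real q) * (A 0 * ennreal (1 / real q ^ k))"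
proof -
  have Q: "real q \<ge> 2" using q2 by simp
  have "anc_cyl_mass A q 0 (j + k) j - anc_cyl_mass A q 0 (j + k) (j - 1) =
      A 0 * (ennreal (1 / real q ^ k) - ennreal (1 / real q ^ Suc k))"
    using assms A_fin
    by (cases k) (simp_all add: anc_cyl_mass_def cyl_mass_def ennreal_right_diff_distrib Suc_diff_le del: power_Suc)
  also have "ennreal (1 / real q ^ k) - ennreal (1 / real q ^ Suc k) = ennreal ((real q - 1) / real q * (1 / real q ^ k))"
    using Q by (simp add: ennreal_minus field_simps)
  also have "A 0 * \<dots> = ennreal ((real q - 1) / real q) * (A 0 * ennreal (1 / real q ^ k))"
    by (subst ennreal_mult) (use Q in \<open>simp_all add: mult_ac\<close>)
  finally show ?thesis unfolding sphere_mass_def using assms by simp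
qed

lemma sphere_mass_diag:
  assumes "j \<ge> 1"
  shows "sphere_mass A q (Suc r) j j = (\<Sum>i\<le>r. A i) + ennreal ((real q - 2) / (real q - 1)) * A (Suc r)"
proof -
  have Q: "real q \<ge> 2" using q2 by simp
  define e where "e = ennreal (1 / (real q - 1))"
  have "ennreal ((real q - 2) / (real q - 1)) + e = 1"
    using Q by (simp add: e_def ennreal_plus[symmetric] field_simps del: ennreal_plus)
  then have split: "A (Suc r) = ennreal ((real q - 2) / (real q - 1)) * A (Suc r) + A (Suc r) * e"
    by (metis distrib_right mult.commute mult_1)
  have fin: "A (Suc r) * e \<noteq> top" using A_fin by (simp add: e_def ennreal_mult_eq_top_iff)
  have "sphere_mass A q (Suc r) j j = (\<Sum>i\<le>r. A i) + A (Suc r) - A (Suc r) * e"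
    using assms by (simp add: sphere_mass_def anc_cyl_mass_def cyl_mass_def e_def)
  also have "\<dots> = (\<Sum>i\<le>r. A i) + ennreal ((real q - 2) / (real q - 1)) * A (Suc r)"
    using fin by (subst split) (simp only: add.assoc[symmetric] ennreal_add_diff_cancel_right[OF fin])
  finally show ?thesis .
qed

end

section \<open>Series of nonnegative extended reals\<close>

lemma ennreal_eq_mult_inverse_of_nat:
  assumes "y = of_nat n * x" "n > 0"
  shows "x = y * ennreal (1 / real n)"
proof -
  have "y * ennreal (1 / real n) = x * (ennreal (real n) * ennreal (1 / real n))"
    using assms(1) by (simp add: ennreal_of_nat_eq_real_of_nat mult_ac)
  also have "ennreal (real n) * ennreal (1 / real n) = 1"
    using assms(2) by (simp add: ennreal_mult[symmetric])
  finally show ?thesis by simp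
qed

lemma ennreal_suminf_head: "(\<Sum>n. f n :: ennreal) = f 0 + (\<Sum>n. f (Suc n))"
proof -
  have "(\<lambda>n. f (Suc n)) sums (\<Sum>n. f (Suc n))" by (rule summable_sums) simp
  then have "f sums ((\<Sum>n. f (Suc n)) + f 0)" by (rule sums_Suc)
  then show ?thesis using sums_unique by (metis add.commute)
qed

lemma ennreal_suminf_segment: "(\<Sum>n. f n :: ennreal) = (\<Sum>i<j. f i) + (\<Sum>n. f (n + j))"
proof (induction j)
  case 0 then show ?case by simp
next
  case (Suc j)
  have "(\<Sum>n. f (n + j)) = f j + (\<Sum>n. f (n + Suc j))"
    using ennreal_suminf_head[of "\<lambda>n. f (n + j)"] by simp
  then show ?case using Suc by (simp add: add.assoc)
qed


lemma suminf_suminf_single: "(\<Sum>k. \<Sum>r. if k = k0 \<and> r = r0 then c else 0 :: ennreal) = c"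
proof -
  have "(\<Sum>r. if k = k0 \<and> r = r0 then c else 0) = (if k = k0 then c else 0)" for k
    by (cases "k = k0") (simp_all add: sums_unique[OF sums_single, symmetric])
  then show ?thesis by (simp add: sums_unique[OF sums_single, symmetric])
qed

lemma sum_shift_index:
  fixes A :: "nat \<Rightarrow> ennreal" and M :: "nat \<Rightarrow> nat \<Rightarrow> ennreal"
  assumes M0: "\<And>r. N < k + r \<Longrightarrow> M k r = 0" and k: "k \<le> N" "k < j"
  shows "(\<Sum>n\<in>{-int N..int N}. A (nat (int j + n)) * (if 0 \<le> int k + n then M k (nat (int k + n)) else 0))
    = (\<Sum>r\<le>N. A (j + r - k) * M k r)"
proof -
  define T where "T n = A (nat (int j + n)) * (if 0 \<le> int k + n then M k (nat (int k + n)) else 0)" for n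
  define g where "g r = int r - int k" for r
  have "(\<Sum>n\<in>{-int N..int N}. T n) = (\<Sum>n\<in>g ` {..N}. T n)"
  proof (rule sum.mono_neutral_right)
    show "g ` {..N} \<subseteq> {-int N..int N}" using k by (auto simp: g_def)
    show "\<forall>n\<in>{-int N..int N} - g ` {..N}. T n = 0"
    proof
      fix n assume n: "n \<in> {-int N..int N} - g ` {..N}"
      have "N < k + nat (int k + n)" if "0 \<le> int k + n"
      proof (rule ccontr)
        assume "\<not> N < k + nat (int k + n)"
        then have "n \<in> g ` {..N}" using that by (auto simp: g_def image_iff intro!: bexI[of _ "nat (int k + n)"])
        then show False using n by simp
      qed
      then show "T n = 0" using M0 by (simp add: T_def)
    qed
  qed simp
  also have "\<dots> = (\<Sum>r\<le>N. T (g r))" by (subst sum.reindex) (auto simp: g_def inj_on_def)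
  also have "\<dots> = (\<Sum>r\<le>N. A (j + r - k) * M k r)"
  proof -
    have "int j + (int r - int k) = int (j + r - k)" for r using k(2) by (simp add: of_nat_diff)
    then show ?thesis by (simp add: T_def g_def)
  qed
  finally show ?thesis by (simp add: T_def)
qed

text \<open>The right-hand side regroups the terms of the left-hand side by \<open>n = r - k\<close>.\<close>

lemma sum_by_difference:
  fixes A :: "nat \<Rightarrow> ennreal" and M :: "nat \<Rightarrow> nat \<Rightarrow> ennreal"
  assumes M0: "\<And>k r. N < k + r \<Longrightarrow> M k r = 0" and j: "N < j"
  shows "(\<Sum>k<j. \<Sum>r. A (j + r - k) * M k r) =
    (\<Sum>n\<in>{-int N..int N}. A (nat (int j + n)) * (\<Sum>k. if 0 \<le> int k + n then M k (nat (int k + n)) else 0))"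
proof -
  define I where "I = {-int N..int N}"
  define T where "T k n = (if 0 \<le> int k + n then M k (nat (int k + n)) else 0)" for k n
  have "(\<Sum>r. A (j + r - k) * M k r) = (\<Sum>r\<le>N. A (j + r - k) * M k r)" for k
    by (rule suminf_finite) (use M0 in auto)
  then have "(\<Sum>k<j. \<Sum>r. A (j + r - k) * M k r) = (\<Sum>k\<le>N. \<Sum>r\<le>N. A (j + r - k) * M k r)"
    using j M0 by (simp, intro sum.mono_neutral_right) auto
  also have "\<dots> = (\<Sum>k\<le>N. \<Sum>n\<in>I. A (nat (int j + n)) * T k n)"
  proof (intro sum.cong refl)
    fix k assume "k \<in> {..N}"
    then show "(\<Sum>r\<le>N. A (j + r - k) * M k r) = (\<Sum>n\<in>I. A (nat (int j + n)) * T k n)"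
      using sum_shift_index[where k=k and A=A and M=M] M0 j by (simp add: I_def T_def)
  qed
  also have "\<dots> = (\<Sum>n\<in>I. \<Sum>k\<le>N. A (nat (int j + n)) * T k n)" by (rule sum.swap)
  also have "\<dots> = (\<Sum>n\<in>I. A (nat (int j + n)) * (\<Sum>k. T k n))"
  proof (intro sum.cong refl)
    fix n
    have "(\<Sum>k. T k n) = (\<Sum>k\<le>N. T k n)" by (rule suminf_finite) (use M0 in \<open>auto simp: T_def\<close>)
    then show "(\<Sum>k\<le>N. A (nat (int j + n)) * T k n) = A (nat (int j + n)) * (\<Sum>k. T k n)"
      by (simp add: sum_distrib_left)
  qed
  finally show ?thesis by (simp add: I_def T_def)
qed

section \<open>Invariant measures on the ends\<close>

locale invariant_setting =
  fixes q :: nat and p :: "vtx \<Rightarrow> vtx \<Rightarrow> real" and m :: "(vtx \<Rightarrow> vtx) measure" and nu :: "bend measure"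
  assumes q2: "q \<ge> 2"
    and tm: "transition_matrix q p" and semi: "semi_isotropic q p"
    and haar: "is_left_haar q m"
    and radon: "radon_on_ends q nu"
    and inv: "mu_invariant q m p nu"
begin

lemma q_pos: "0 < q" using q2 by simp

lemma root_mem_verts: "root \<in> verts q" using root_in_verts[OF q_pos] .

lemma space_m: "space m = Aff q" using haar by (simp add: is_left_haar_def)

lemma sets_m: "sets m = borel_sets_of (aff_top q)" using haar by (simp add: is_left_haar_def)

lemma cyl_in_sets: "x \<in> verts q \<Longrightarrow> cyl q x \<in> sets nu"
  using openin_in_borel_sets_of[OF cyl_open] radon by (simp add: radon_on_ends_def)

lemma cyl_finite: "z \<in> verts q \<Longrightarrow> emeasure nu (cyl q z) \<noteq> \<infinity>"
  using cyl_compact radon by (simp add: radon_on_ends_def less_top)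

lemma p_nonneg: "x \<in> verts q \<Longrightarrow> y \<in> verts q \<Longrightarrow> p x y \<ge> 0"
  using tm by (simp add: transition_matrix_def)

lemma topspace_aff_top: "topspace (aff_top q) = Aff q"
proof -
  have "\<Union>{{g \<in> Aff q. g x = y} | x y. x \<in> verts q \<and> y \<in> verts q} = Aff q"
  proof
    show "Aff q \<subseteq> \<Union>{{g \<in> Aff q. g x = y} | x y. x \<in> verts q \<and> y \<in> verts q}"
    proof
      fix g assume g: "g \<in> Aff q"
      then have "g \<in> {g' \<in> Aff q. g' root = g root}" by simp
      then show "g \<in> \<Union>{{g \<in> Aff q. g x = y} | x y. x \<in> verts q \<and> y \<in> verts q}"
        using root_mem_verts Aff_verts[OF g root_mem_verts] by blast
    qed
  qed auto
  then show ?thesis by (simp add: aff_top_def)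
qed

lemma openin_aff_top_fix: "x \<in> verts q \<Longrightarrow> y \<in> verts q \<Longrightarrow> openin (aff_top q) {g \<in> Aff q. g x = y}"
  unfolding aff_top_def by (rule topology_generated_by_Basis) blast

lemma continuous_map_left_comp:
  assumes t: "t \<in> Aff q" and tt: "\<forall>x. t (t x) = x"
  shows "continuous_map (aff_top q) (aff_top q) (\<lambda>g. t \<circ> g)"
proof -
  define B where "B = {{g \<in> Aff q. g x = y} | x y. x \<in> verts q \<and> y \<in> verts q}"
  have LA: "t \<circ> g \<in> Aff q" if "g \<in> Aff q" for g using Aff_comp[OF t that] .
  have "openin (aff_top q) ((\<lambda>g. t \<circ> g) -` U \<inter> topspace (aff_top q))" if UB: "U \<in> B" for U
  proof -
    obtain x y where U: "U = {g \<in> Aff q. g x = y}" "x \<in> verts q" "y \<in> verts q"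
      using UB unfolding B_def by blast
    have swap: "t (g x) = y \<longleftrightarrow> g x = t y" for g using tt by metis
    have "(\<lambda>g. t \<circ> g) -` U \<inter> topspace (aff_top q) = {g \<in> Aff q. g x = t y}"
      using U(1) LA by (auto simp: topspace_aff_top swap)
    then show ?thesis using openin_aff_top_fix[OF U(2) Aff_verts[OF t U(3)]] by simp
  qed
  moreover have "(\<lambda>g. t \<circ> g) ` topspace (aff_top q) \<subseteq> \<Union>B"
    using LA topspace_aff_top by (auto simp: B_def aff_top_def)
  ultimately have "continuous_map (aff_top q) (topology_generated_by B) (\<lambda>g. t \<circ> g)"
    unfolding continuous_on_generated_topo_iff by blast
  then show ?thesis by (simp add: aff_top_def B_def)
qed

lemma nn_integral_left_comp_involution:
  assumes t: "t \<in> Aff q" and tt: "\<forall>x. t (t x) = x"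
  shows "(\<integral>\<^sup>+g. F (t \<circ> g) \<partial>m) = integral\<^sup>N m F"
proof (rule nn_integral_invol)
  have tt': "t \<circ> (t \<circ> g) = g" for g by (rule ext) (simp add: tt)
  show "(\<lambda>g. t \<circ> g) \<in> measurable m m"
    using continuous_map_measurable_borel_sets_of[OF continuous_map_left_comp[OF t tt] sets_m] space_m topspace_aff_top
    by simp
  show "\<forall>g\<in>space m. t \<circ> (t \<circ> g) = g" using tt' by blast
  show "\<forall>A\<in>sets m. emeasure m ((\<lambda>g. t \<circ> g) -` A \<inter> space m) = emeasure m A"
  proof
    fix A assume A: "A \<in> sets m"
    have "(\<lambda>g. t \<circ> g) -` A \<inter> space m = (\<lambda>g. t \<circ> g) ` A"
    proof (intro equalityI subsetI)
      fix g assume "g \<in> (\<lambda>g. t \<circ> g) -` A \<inter> space m"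
      then show "g \<in> (\<lambda>g. t \<circ> g) ` A" using tt'[of g] by (metis IntD1 image_eqI vimageE)
    next
      fix g assume "g \<in> (\<lambda>g. t \<circ> g) ` A"
      then obtain a where a: "a \<in> A" "g = t \<circ> a" by blast
      then show "g \<in> (\<lambda>g. t \<circ> g) -` A \<inter> space m"
        using sets.sets_into_space[OF A] space_m Aff_comp[OF t] tt'[of a] by auto
    qed
    then show "emeasure m ((\<lambda>g. t \<circ> g) -` A \<inter> space m) = emeasure m A"
      using haar t A by (simp add: is_left_haar_def)
  qed
qed

lemma p_root_Aff_fixing_root:
  assumes t: "t \<in> Aff q" and t_root: "t root = root" and x: "x \<in> verts q"
  shows "p root (t x) = p root x"
proof -
  have "up root (t x) = up root x" "up (t x) root = up x root"
    using up_Aff[OF t root_mem_verts x] up_Aff[OF t x root_mem_verts] t_root by auto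
  then show ?thesis using semi root_mem_verts x Aff_verts[OF t x] unfolding semi_isotropic_def by blast
qed

text \<open>Substitute \<open>g \<mapsto> t \<circ> g\<close> in \<open>\<mu> * \<nu>\<close>: the density \<open>p(o, g o)\<close> does not change because \<open>t\<close>
fixes \<open>o\<close>, and the Haar integral does not change by left invariance.\<close>

lemma emeasure_cyl_child_swap:
  assumes w: "w \<in> verts q" and ab: "a < q" "b < q" and troot: "swap_below q w a b root = root"
  shows "emeasure nu (cyl q (child w a)) = emeasure nu (cyl q (child w b))"
proof -
  define t where "t = swap_below q w a b"
  have t: "t \<in> Aff q" using swap_below_Aff[OF ab] by (simp add: t_def)
  have tt: "\<forall>x. t (t x) = x" using swap_below_swap_below[OF ab] by (simp add: t_def)
  define Ea where "Ea = cyl q (child w a)"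
  define Eb where "Eb = cyl q (child w b)"
  have Ea: "Ea \<in> sets nu" using cyl_in_sets[OF child_in_verts[OF w ab(1)]] by (simp add: Ea_def)
  have Eb: "Eb \<in> sets nu" using cyl_in_sets[OF child_in_verts[OF w ab(2)]] by (simp add: Eb_def)
  define F where "F g = emeasure nu {xi \<in> ends q. act_end q g xi \<in> Ea} * ennreal (p root (g root))" for g
  have "emeasure nu Eb = conv q m p nu Eb" using inv Eb by (simp add: mu_invariant_def)
  also have "\<dots> = (\<integral>\<^sup>+g. F (t \<circ> g) \<partial>m)"
    unfolding conv_def
  proof (rule nn_integral_cong)
    fix g assume "g \<in> space m"
    then have g: "g \<in> Aff q" using space_m by simp
    have "{xi \<in> ends q. act_end q (t \<circ> g) xi \<in> Ea} = {xi \<in> ends q. act_end q g xi \<in> Eb}"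
    proof (intro Collect_cong conj_cong refl)
      fix xi assume xi: "xi \<in> ends q"
      have e: "act_end q g xi \<in> ends q" using act_end_spec[OF g xi] by blast
      have "act_end q (t \<circ> g) xi = swap_below_end w a b (act_end q g xi)"
        using act_end_comp[OF t g xi] act_end_swap_below[OF ab e] by (simp add: t_def)
      then show "act_end q (t \<circ> g) xi \<in> Ea \<longleftrightarrow> act_end q g xi \<in> Eb"
        using swap_below_end_cyl_child[OF ab w e] by (simp add: Ea_def Eb_def)
    qed
    moreover have "p root (t (g root)) = p root (g root)"
      using p_root_Aff_fixing_root[OF t _ Aff_verts[OF g root_mem_verts]] troot by (simp add: t_def)
    ultimately show "emeasure nu {xi \<in> ends q. act_end q g xi \<in> Eb} * ennreal (p root (g root)) = F (t \<circ> g)"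
      by (simp add: F_def)
  qed
  also have "\<dots> = integral\<^sup>N m F" by (rule nn_integral_left_comp_involution[OF t tt])
  also have "\<dots> = conv q m p nu Ea" unfolding conv_def F_def ..
  also have "\<dots> = emeasure nu Ea" using inv Ea by (simp add: mu_invariant_def)
  finally show ?thesis by (simp add: Ea_def Eb_def)
qed

lemma emeasure_cyl_sum_children:
  assumes w: "w \<in> verts q"
  shows "emeasure nu (cyl q w) = (\<Sum>c<q. emeasure nu (cyl q (child w c)))"
  unfolding cyl_children[OF w]
  by (rule sum_emeasure[symmetric]) (auto intro!: cyl_in_sets child_in_verts w cyl_children_disjoint)

lemma emeasure_cyl_eq_q_times_child:
  assumes w: "w \<in> verts q" and np: "\<not> strict_anc w root" and c: "c < q"
  shows "emeasure nu (cyl q w) = of_nat q * emeasure nu (cyl q (child w c))"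
proof -
  have "emeasure nu (cyl q w) = (\<Sum>c'<q. emeasure nu (cyl q (child w c)))"
    unfolding emeasure_cyl_sum_children[OF w]
    by (rule sum.cong[OF refl]) (metis emeasure_cyl_child_swap[OF w _ c] swap_below_root np lessThan_iff)
  then show ?thesis by simp
qed

definition omega_mass :: "nat \<Rightarrow> ennreal" where
  "omega_mass j = emeasure nu (Omega q j root)"

lemma cyl_root_anc_iff: "xi \<in> cyl q (root_anc j) \<longleftrightarrow> xi \<in> ends q \<and> up_end root xi \<le> j"
  using up_end_le_iff_cyl[OF root_mem_verts] by (auto simp: funpow_pred_root cyl_def)

lemma Omega_0: "Omega q 0 root = cyl q (root_anc 0)"
  using cyl_root_anc_iff[where j=0] by (auto simp: Omega_def)

lemma Omega_Suc: "Omega q (Suc j) root = cyl q (root_anc (Suc j)) - cyl q (root_anc j)"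
  using cyl_root_anc_iff[where j=j] cyl_root_anc_iff[where j="Suc j"] by (auto simp: Omega_def)

lemma Omega_in_sets: "Omega q j root \<in> sets nu"
  by (cases j) (auto simp: Omega_0 Omega_Suc intro!: cyl_in_sets root_anc_in_verts q_pos)

lemma emeasure_cyl_root_anc: "emeasure nu (cyl q (root_anc j)) = (\<Sum>i\<le>j. omega_mass i)"
proof (induction j)
  case 0 then show ?case by (simp add: omega_mass_def Omega_0)
next
  case (Suc j)
  have "cyl q (root_anc (Suc j)) = cyl q (root_anc j) \<union> Omega q (Suc j) root"
    using Omega_Suc cyl_root_anc_iff by auto
  moreover have "emeasure nu (cyl q (root_anc j) \<union> Omega q (Suc j) root) =
      emeasure nu (cyl q (root_anc j)) + emeasure nu (Omega q (Suc j) root)"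
    by (rule plus_emeasure[symmetric]) (auto simp: Omega_Suc cyl_in_sets root_anc_in_verts q_pos Omega_in_sets)
  ultimately show ?case using Suc by (simp add: omega_mass_def)
qed

lemma omega_mass_finite: "omega_mass j \<noteq> top"
proof -
  have "(\<Sum>i\<le>j. omega_mass i) \<noteq> top"
    using cyl_finite[OF root_anc_in_verts[OF q_pos], of j] emeasure_cyl_root_anc[of j] by simp
  then show ?thesis by simp
qed

lemma child_root_anc_0: "child (root_anc (Suc r)) 0 = root_anc r"
  by (auto simp: child_def root_anc_def fun_eq_iff)

lemma Omega_children:
  assumes r: "r \<ge> 1"
  shows "Omega q r root = (\<Union>c\<in>{1..<q}. cyl q (child (root_anc r) c))"
proof -
  define C where "C c = cyl q (child (root_anc r) c)" for c
  obtain r' where r': "r = Suc r'" using r by (cases r) auto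
  have dj: "C c \<inter> C 0 = {}" if "c \<in> {1..<q}" for c
    using cyl_children_disjoint[OF root_anc_in_verts[OF q_pos]] that q_pos
    unfolding disjoint_family_on_def C_def by auto
  have "Omega q r root = (\<Union>c<q. C c) - C 0"
    unfolding C_def r' Omega_Suc cyl_children[OF root_anc_in_verts[OF q_pos]] child_root_anc_0 ..
  also have "\<dots> = (\<Union>c\<in>{1..<q}. C c)"
  proof (intro equalityI subsetI)
    fix x assume "x \<in> (\<Union>c<q. C c) - C 0"
    then obtain c where "c < q" "x \<in> C c" "c \<noteq> 0" by (metis DiffE UN_E lessThan_iff)
    then show "x \<in> (\<Union>c\<in>{1..<q}. C c)" by auto
  next
    fix x assume "x \<in> (\<Union>c\<in>{1..<q}. C c)"
    then obtain c where "c \<in> {1..<q}" "x \<in> C c" by blast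
    then show "x \<in> (\<Union>c<q. C c) - C 0" using dj[of c] by auto
  qed
  finally show ?thesis by (simp add: C_def)
qed

lemma emeasure_cyl_child_root_anc:
  assumes r: "r \<ge> 1" and c: "c \<in> {1..<q}"
  shows "emeasure nu (cyl q (child (root_anc r) c)) = omega_mass r * ennreal (1 / real (q - 1))"
proof -
  have av: "root_anc r \<in> verts q" using root_anc_in_verts[OF q_pos] .
  have eq: "emeasure nu (cyl q (child (root_anc r) c')) = emeasure nu (cyl q (child (root_anc r) c))"
    if "c' \<in> {1..<q}" for c'
    using emeasure_cyl_child_swap[OF av _ _ swap_below_root] that c by auto
  have "omega_mass r = (\<Sum>c'\<in>{1..<q}. emeasure nu (cyl q (child (root_anc r) c')))"
    unfolding omega_mass_def Omega_children[OF r]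
  proof (rule sum_emeasure[symmetric])
    show "disjoint_family_on (\<lambda>c. cyl q (child (root_anc r) c)) {1..<q}"
      using cyl_children_disjoint[OF av] by (rule disjoint_family_on_mono[rotated]) auto
  qed (auto intro!: cyl_in_sets child_in_verts av)
  also have "\<dots> = of_nat (q - 1) * emeasure nu (cyl q (child (root_anc r) c))" using eq by simp
  finally show ?thesis using ennreal_eq_mult_inverse_of_nat[of "omega_mass r" "q - 1"] q2 by simp
qed

lemma emeasure_cyl_step:
  assumes z: "z \<in> verts q" and d: "up z root = Suc d"
    and IH: "emeasure nu (cyl q (pred z)) = cyl_mass omega_mass q (up root z) d"
  shows "emeasure nu (cyl q z) = cyl_mass omega_mass q (up root z) (Suc d)"
proof -
  define w where "w = pred z"
  define c where "c = snd z (fst z - 1)"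
  have wv: "w \<in> verts q" and zc: "z = child w c" and c: "c < q"
    using child_pred[OF z] pred_in_verts[OF z] by (simp_all add: w_def c_def)
  have uw: "up root w = up root z" "up w root = d"
    using up_funpow_pred_root[OF z, of 1] d by (simp_all add: w_def)
  show ?thesis
  proof (cases "strict_anc w root")
    case False
    then have "up root z = 0 \<or> d \<noteq> 0"
      using uw up_root_eq_0_iff[OF wv] strict_anc_root_iff[OF wv] by (metis less_one not_le)
    moreover have "emeasure nu (cyl q w) = of_nat q * emeasure nu (cyl q z)"
      using emeasure_cyl_eq_q_times_child[OF wv False c] zc by simp
    ultimately show ?thesis
      using IH ennreal_eq_mult_inverse_of_nat q_pos cyl_mass_Suc_off_ray[OF q2] by (metis w_def)
  next
    case True
    then obtain r where r: "r \<ge> 1" "w = root_anc r" using strict_anc_root_iff[OF wv] by blast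
    then have d0: "d = 0" and rz: "up root z = r" using uw up_root_anc[OF q_pos] by auto
    have "c \<noteq> 0"
    proof
      assume "c = 0"
      then have "z = root_anc (r - 1)" using zc r child_root_anc_0[of "r - 1"] by simp
      then show False using d up_root_anc(2)[OF q_pos] by simp
    qed
    then have "emeasure nu (cyl q z) = omega_mass r * ennreal (1 / real (q - 1))"
      using emeasure_cyl_child_root_anc[OF r(1)] c zc r(2) by simp
    then show ?thesis using d0 rz r(1) q2 by (simp add: cyl_mass_def of_nat_diff)
  qed
qed

theorem emeasure_cyl:
  assumes z: "z \<in> verts q"
  shows "emeasure nu (cyl q z) = cyl_mass omega_mass q (up root z) (up z root)"
proof -
  have "\<forall>z\<in>verts q. up z root = d \<longrightarrow> emeasure nu (cyl q z) = cyl_mass omega_mass q (up root z) d" for d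
  proof (induction d)
    case 0
    show ?case using up_root_eq_0_iff emeasure_cyl_root_anc by (simp add: cyl_mass_def) metis
  next
    case (Suc d)
    show ?case
    proof (intro ballI impI)
      fix z assume z: "z \<in> verts q" and d: "up z root = Suc d"
      have "up root (pred z) = up root z" "up (pred z) root = d"
        using up_funpow_pred_root[OF z, of 1] d by simp_all
      then show "emeasure nu (cyl q z) = cyl_mass omega_mass q (up root z) (Suc d)"
        using emeasure_cyl_step[OF z d] Suc.IH pred_in_verts[OF z] by metis
    qed
  qed
  then show ?thesis using z by blast
qed

section \<open>The convolution equation\<close>

lemma coset_in_sets: "x \<in> verts q \<Longrightarrow> {g \<in> Aff q. g root = x} \<in> sets m"
  using openin_in_borel_sets_of[OF openin_aff_top_fix[OF root_mem_verts]] sets_m by simp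

lemma coset_measure:
  assumes x: "x \<in> verts q"
  shows "emeasure m {g \<in> Aff q. g root = x} = 1"
proof -
  define t where "t = shift_to q x"
  define s where "s = shift_from q x"
  have t: "t \<in> Aff q" and s: "s \<in> Aff q" using shift_to_Aff[OF x] shift_from_Aff[OF x] by (simp_all add: t_def s_def)
  have ts: "t (s y) = y" for y using shift_to_shift_from[OF x] by (simp add: t_def s_def)
  have st: "s (t y) = y" for y using shift_from_shift_to[OF x] by (simp add: t_def s_def)
  have t_root: "t root = x" using shift_to_root[OF x] by (simp add: t_def)
  have "{g \<in> Aff q. g root = x} = (\<lambda>h. t \<circ> h) ` stab_root q"
  proof
    show "(\<lambda>h. t \<circ> h) ` stab_root q \<subseteq> {g \<in> Aff q. g root = x}"
      using Aff_comp[OF t] t_root by (auto simp: stab_root_def)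
    show "{g \<in> Aff q. g root = x} \<subseteq> (\<lambda>h. t \<circ> h) ` stab_root q"
    proof
      fix g assume g: "g \<in> {g \<in> Aff q. g root = x}"
      have "s (g root) = root" using g st[of root] t_root by simp
      then have "s \<circ> g \<in> stab_root q" using Aff_comp[OF s] g by (auto simp: stab_root_def)
      moreover have "g = t \<circ> (s \<circ> g)" using ts by (simp add: fun_eq_iff)
      ultimately show "g \<in> (\<lambda>h. t \<circ> h) ` stab_root q" by blast
    qed
  qed
  moreover have "stab_root q \<in> sets m" using coset_in_sets[OF root_mem_verts] by (simp add: stab_root_def)
  ultimately have "emeasure m {g \<in> Aff q. g root = x} = emeasure m (stab_root q)"
    using haar t by (simp add: is_left_haar_def)
  also have "\<dots> = 1" using haar by (simp add: is_left_haar_def)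
  finally show ?thesis .
qed

lemma emeasure_sphere:
  assumes y: "y \<in> verts q"
  shows "emeasure nu {xi \<in> ends q. up_end y xi = j} = sphere_mass omega_mass q (up root y) (up y root) j"
proof -
  have C: "{xi \<in> ends q. up_end y xi \<le> i} = cyl q ((pred ^^ i) y)" for i
    using up_end_le_iff_cyl[OF y] by (auto simp: cyl_def)
  have V: "emeasure nu (cyl q ((pred ^^ i) y)) = anc_cyl_mass omega_mass q (up root y) (up y root) i" for i
    using emeasure_cyl[OF funpow_pred_in_verts[OF y]] up_funpow_pred_root[OF y] by (simp add: anc_cyl_mass_def)
  show ?thesis
  proof (cases j)
    case 0
    have "{xi \<in> ends q. up_end y xi = j} = cyl q ((pred ^^ 0) y)" using C[of 0] 0 by simp
    then show ?thesis using V[of 0] 0 by (simp add: sphere_mass_def)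
  next
    case (Suc j')
    have "{xi \<in> ends q. up_end y xi = j} = cyl q ((pred ^^ j) y) - cyl q ((pred ^^ j') y)"
      unfolding C[symmetric] using Suc by auto
    moreover have "cyl q ((pred ^^ j') y) \<subseteq> cyl q ((pred ^^ j) y)" unfolding C[symmetric] using Suc by auto
    moreover have v: "(pred ^^ j) y \<in> verts q" "(pred ^^ j') y \<in> verts q"
      using funpow_pred_in_verts[OF y] by auto
    ultimately have "emeasure nu {xi \<in> ends q. up_end y xi = j}
        = emeasure nu (cyl q ((pred ^^ j) y)) - emeasure nu (cyl q ((pred ^^ j') y))"
      using emeasure_Diff[OF cyl_finite[OF v(2)] cyl_in_sets[OF v(1)] cyl_in_sets[OF v(2)]] by simp
    then show ?thesis unfolding V sphere_mass_def using Suc by simp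
  qed
qed

lemma emeasure_act_end_preimage_Omega:
  assumes g: "g \<in> Aff q"
  shows "emeasure nu {xi \<in> ends q. act_end q g xi \<in> Omega q j root}
       = sphere_mass omega_mass q (up (g root) root) (up root (g root)) j"
proof -
  obtain y where y: "y \<in> verts q" "g y = root" using Aff_surj[OF g root_mem_verts] by blast
  have "{xi \<in> ends q. act_end q g xi \<in> Omega q j root} = {xi \<in> ends q. up_end y xi = j}"
  proof (intro Collect_cong conj_cong refl)
    fix xi assume xi: "xi \<in> ends q"
    have "up_end root (act_end q g xi) = up_end y xi" using up_end_Aff[OF g y(1) xi] y(2) by simp
    then show "act_end q g xi \<in> Omega q j root \<longleftrightarrow> up_end y xi = j"
      using act_end_spec[OF g xi] by (simp add: Omega_def)
  qed
  moreover have "up root y = up (g root) root" using up_Aff[OF g root_mem_verts y(1)] y(2) by simp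
  moreover have "up y root = up root (g root)" using up_Aff[OF g y(1) root_mem_verts] y(2) by simp
  ultimately show ?thesis using emeasure_sphere[OF y(1)] by simp
qed

lemma Tkr_finite: "finite (Tkr q k r root)"
proof -
  have "Tkr q k r root \<subseteq> (\<lambda>f. (int r - int k, f)) ` {f :: int \<Rightarrow> nat. \<forall>n. f n < q \<and> (n < - int k \<or> n \<ge> int r - int k \<longrightarrow> f n = 0)}"
  proof
    fix y assume y: "y \<in> Tkr q k r root"
    obtain h f where e: "y = (h, f)" by (cases y)
    have yv: "(h, f) \<in> verts q" using y e by (simp add: Tkr_def)
    obtain mm where mm: "\<forall>n<mm. f n = 0" using verts_eventually_zero[OF yv] by blast
    have z0: "\<forall>n<(0::int). (\<lambda>_. 0::nat) n = 0" by simp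
    note P = agree_level_spec[OF z0 mm]
    define L where "L = agree_level (min 0 h) (\<lambda>_. 0) f"
    have L0: "L \<le> 0" "L \<le> h" "\<forall>n<L. f n = 0" using P(1,2)[of "min 0 h"] by (auto simp: L_def)
    have "up root y = k" "up y root = r" using y by (auto simp: Tkr_def)
    then have "nat (- L) = k" "nat (h - L) = r" using up_root_eqs[OF yv] e by (simp_all add: L_def)
    then have hL: "L = - int k" "h = int r - int k" using L0 by auto
    have "\<forall>n. f n < q \<and> (n < - int k \<or> n \<ge> int r - int k \<longrightarrow> f n = 0)"
      using yv L0 hL by (auto simp: verts_def)
    then show "y \<in> (\<lambda>f. (int r - int k, f)) ` {f :: int \<Rightarrow> nat. \<forall>n. f n < q \<and> (n < - int k \<or> n \<ge> int r - int k \<longrightarrow> f n = 0)}"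
      using e hL by blast
  qed
  moreover have "finite ((\<lambda>f. (int r - int k, f)) ` {f :: int \<Rightarrow> nat. \<forall>n. f n < q \<and> (n < - int k \<or> n \<ge> int r - int k \<longrightarrow> f n = 0)})"
    using finite_digit_functions by blast
  ultimately show ?thesis by (rule finite_subset)
qed

definition pkr :: "nat \<Rightarrow> nat \<Rightarrow> real" where
  "pkr k r = p root (SOME x. x \<in> Tkr q k r root)"

lemma p_root_Tkr: "x \<in> Tkr q k r root \<Longrightarrow> p root x = pkr k r"
proof -
  assume x: "x \<in> Tkr q k r root"
  define x' where "x' = (SOME x. x \<in> Tkr q k r root)"
  have x': "x' \<in> Tkr q k r root" using x someI unfolding x'_def by metis
  have xx: "x \<in> verts q" "x' \<in> verts q" "up root x = up root x'" "up x root = up x' root"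
    using x x' by (auto simp: Tkr_def)
  have "p root x = p root x'"
    using semi xx root_mem_verts unfolding semi_isotropic_def by blast
  then show ?thesis unfolding pkr_def x'_def .
qed

lemma mukr_eq: "mukr q p k r = ennreal (pkr k r) * of_nat (card (Tkr q k r root))"
proof -
  have "(\<Sum>x\<in>Tkr q k r root. p root x) = of_nat (card (Tkr q k r root)) * pkr k r"
    using p_root_Tkr by simp
  moreover have "pkr k r \<ge> 0" if ne: "Tkr q k r root \<noteq> {}"
  proof -
    obtain x where x: "x \<in> Tkr q k r root" using ne by blast
    then have "x \<in> verts q" by (simp add: Tkr_def)
    then show ?thesis using p_root_Tkr[OF x] p_nonneg root_mem_verts by metis
  qed
  ultimately show ?thesis unfolding mukr_def
    by (cases "Tkr q k r root = {}") (simp_all add: ennreal_mult ennreal_of_nat_eq_real_of_nat mult.commute)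
qed

definition Aff_Tkr :: "nat \<Rightarrow> nat \<Rightarrow> (vtx \<Rightarrow> vtx) set" where
  "Aff_Tkr k r = {g \<in> Aff q. g root \<in> Tkr q k r root}"

lemma Aff_Tkr_eq_UN_cosets: "Aff_Tkr k r = (\<Union>x\<in>Tkr q k r root. {g \<in> Aff q. g root = x})"
  by (auto simp: Aff_Tkr_def)

lemma Aff_Tkr_in_sets: "Aff_Tkr k r \<in> sets m"
  unfolding Aff_Tkr_eq_UN_cosets by (intro sets.finite_UN Tkr_finite coset_in_sets) (auto simp: Tkr_def)

lemma emeasure_Aff_Tkr: "emeasure m (Aff_Tkr k r) = of_nat (card (Tkr q k r root))"
proof -
  have "emeasure m (Aff_Tkr k r) = (\<Sum>x\<in>Tkr q k r root. emeasure m {g \<in> Aff q. g root = x})"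
    unfolding Aff_Tkr_eq_UN_cosets
  proof (rule sum_emeasure[symmetric])
    show "(\<lambda>x. {g \<in> Aff q. g root = x}) ` Tkr q k r root \<subseteq> sets m"
      using coset_in_sets by (auto simp: Tkr_def)
    show "disjoint_family_on (\<lambda>x. {g \<in> Aff q. g root = x}) (Tkr q k r root)"
      by (auto simp: disjoint_family_on_def)
    show "finite (Tkr q k r root)" by (rule Tkr_finite)
  qed
  also have "\<dots> = (\<Sum>x\<in>Tkr q k r root. 1)" by (rule sum.cong) (auto simp: coset_measure Tkr_def)
  finally show ?thesis by simp
qed

theorem omega_mass_convolution:
  "omega_mass j = (\<Sum>k. \<Sum>r. sphere_mass omega_mass q r k j * mukr q p k r)"
proof -
  define c where "c k r = sphere_mass omega_mass q r k j * ennreal (pkr k r)" for k r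
  have integrand: "emeasure nu {xi \<in> ends q. act_end q g xi \<in> Omega q j root} * ennreal (p root (g root))
      = (\<Sum>k. \<Sum>r. c k r * indicator (Aff_Tkr k r) g)" if g: "g \<in> Aff q" for g
  proof -
    define k0 where "k0 = up root (g root)"
    define r0 where "r0 = up (g root) root"
    have xv: "g root \<in> verts q" using Aff_verts[OF g root_mem_verts] .
    have "c k r * indicator (Aff_Tkr k r) g = (if k = k0 \<and> r = r0 then c k0 r0 else 0)" for k r
      using g xv by (auto simp: Aff_Tkr_def Tkr_def k0_def r0_def)
    then have "(\<Sum>k. \<Sum>r. c k r * indicator (Aff_Tkr k r) g) = c k0 r0"
      by (simp add: suminf_suminf_single)
    moreover have "g root \<in> Tkr q k0 r0 root" using xv by (simp add: Tkr_def k0_def r0_def)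
    ultimately show ?thesis
      using emeasure_act_end_preimage_Omega[OF g] p_root_Tkr by (simp add: c_def k0_def r0_def)
  qed
  have "omega_mass j = conv q m p nu (Omega q j root)"
    using inv Omega_in_sets by (simp add: mu_invariant_def omega_mass_def)
  also have "\<dots> = (\<integral>\<^sup>+g. (\<Sum>k. \<Sum>r. c k r * indicator (Aff_Tkr k r) g) \<partial>m)"
    unfolding conv_def by (rule nn_integral_cong) (simp add: integrand space_m)
  also have "\<dots> = (\<Sum>k. \<integral>\<^sup>+g. (\<Sum>r. c k r * indicator (Aff_Tkr k r) g) \<partial>m)"
    by (rule nn_integral_suminf) (auto intro!: borel_measurable_suminf_order borel_measurable_times_ennreal
        borel_measurable_indicator Aff_Tkr_in_sets)
  also have "\<dots> = (\<Sum>k. \<Sum>r. \<integral>\<^sup>+g. c k r * indicator (Aff_Tkr k r) g \<partial>m)"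
    by (rule suminf_cong, rule nn_integral_suminf)
      (auto intro!: borel_measurable_times_ennreal borel_measurable_indicator Aff_Tkr_in_sets)
  also have "\<dots> = (\<Sum>k. \<Sum>r. c k r * emeasure m (Aff_Tkr k r))"
    by (simp add: nn_integral_cmult_indicator Aff_Tkr_in_sets)
  also have "\<dots> = (\<Sum>k. \<Sum>r. sphere_mass omega_mass q r k j * mukr q p k r)"
    by (simp add: c_def emeasure_Aff_Tkr mukr_eq mult.assoc)
  finally show ?thesis .
qed

abbreviation mu where "mu \<equiv> mukr q p"

lemma omega_mass_0_equation:
  "omega_mass 0 =
      (\<Sum>k. \<Sum>r. omega_mass (Suc r) * ennreal (1 / ((real q - 1) * real q ^ k)) * mu (Suc k) (Suc r))
    + (\<Sum>k. omega_mass 0 * ennreal (1 / real q ^ Suc k) * mu (Suc k) 0)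
    + (\<Sum>r. (\<Sum>i\<le>r. omega_mass i) * mu 0 r)"
proof -
  define T where "T k r = sphere_mass omega_mass q r k 0 * mu k r" for k r
  have "omega_mass 0 = (\<Sum>k. \<Sum>r. T k r)" using omega_mass_convolution[of 0] by (simp add: T_def)
  also have "\<dots> = (\<Sum>r. T 0 r) + (\<Sum>k. \<Sum>r. T (Suc k) r)" by (rule ennreal_suminf_head)
  also have "(\<Sum>k. \<Sum>r. T (Suc k) r) = (\<Sum>k. T (Suc k) 0 + (\<Sum>r. T (Suc k) (Suc r)))"
    by (rule suminf_cong) (rule ennreal_suminf_head)
  also have "\<dots> = (\<Sum>k. T (Suc k) 0) + (\<Sum>k. \<Sum>r. T (Suc k) (Suc r))" by (rule suminf_add[symmetric]) simp_all
  finally show ?thesis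
    by (simp add: T_def sphere_mass_0_0 sphere_mass_0_Suc_0 sphere_mass_Suc_Suc_0 ac_simps del: power_Suc)
qed

lemma omega_mass_equation:
  assumes j: "j \<ge> 1"
  shows "omega_mass j =
      (\<Sum>k<j. \<Sum>r. omega_mass (j + r - k) * mu k r)
    + (\<Sum>k. \<Sum>r. omega_mass (Suc r) * ennreal (1 / real q ^ Suc k) * mu (j + 1 + k) (Suc r))
    + ennreal ((real q - 1) / real q) * (\<Sum>k. omega_mass 0 * ennreal (1 / real q ^ k) * mu (j + k) 0)
    + (\<Sum>r. ((\<Sum>i\<le>r. omega_mass i) + ennreal ((real q - 2) / (real q - 1)) * omega_mass (Suc r))
          * mu j (Suc r))"
proof -
  note sphere = sphere_mass_less[OF q2 omega_mass_finite] sphere_mass_greater[OF q2 omega_mass_finite j]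
    sphere_mass_greater_0[OF q2 omega_mass_finite j] sphere_mass_diag[OF q2 omega_mass_finite j]
  define T where "T k r = sphere_mass omega_mass q r k j * mu k r" for k r
  define S where "S k = (\<Sum>r. T k r)" for k
  have "omega_mass j = (\<Sum>k. S k)" using omega_mass_convolution[of j] by (simp add: T_def S_def)
  also have "\<dots> = (\<Sum>k<j. S k) + (\<Sum>k. S (k + j))" by (rule ennreal_suminf_segment)
  also have "(\<Sum>k. S (k + j)) = S j + (\<Sum>k. S (j + 1 + k))"
    using ennreal_suminf_head[of "\<lambda>k. S (k + j)"] by (simp add: ac_simps)
  also have "S j = T j 0 + (\<Sum>r. T j (Suc r))" unfolding S_def by (rule ennreal_suminf_head)
  also have "(\<Sum>k. S (j + 1 + k)) = (\<Sum>k. T (j + 1 + k) 0 + (\<Sum>r. T (j + 1 + k) (Suc r)))"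
    unfolding S_def by (rule suminf_cong) (rule ennreal_suminf_head)
  also have "\<dots> = (\<Sum>k. T (j + 1 + k) 0) + (\<Sum>k. \<Sum>r. T (j + 1 + k) (Suc r))"
    by (rule suminf_add[symmetric]) simp_all
  finally have e: "omega_mass j = (\<Sum>k<j. S k) + (\<Sum>k. \<Sum>r. T (j + 1 + k) (Suc r))
      + (T j 0 + (\<Sum>k. T (j + 1 + k) 0)) + (\<Sum>r. T j (Suc r))" by (simp only: ac_simps)
  have A: "(\<Sum>k<j. S k) = (\<Sum>k<j. \<Sum>r. omega_mass (j + r - k) * mu k r)"
    by (rule sum.cong) (auto simp: S_def T_def sphere(1))
  have B: "(\<Sum>k. \<Sum>r. T (j + 1 + k) (Suc r)) =
      (\<Sum>k. \<Sum>r. omega_mass (Suc r) * ennreal (1 / real q ^ Suc k) * mu (j + 1 + k) (Suc r))"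
    unfolding T_def sphere(2) ..
  have "T j 0 + (\<Sum>k. T (j + 1 + k) 0) = (\<Sum>k. T (j + k) 0)"
    using ennreal_suminf_head[of "\<lambda>k. T (j + k) 0"] by simp
  also have "\<dots> = ennreal ((real q - 1) / real q) * (\<Sum>k. omega_mass 0 * ennreal (1 / real q ^ k) * mu (j + k) 0)"
    unfolding T_def sphere ennreal_suminf_cmult[symmetric] by (simp only: mult.assoc)
  finally have C: "T j 0 + (\<Sum>k. T (j + 1 + k) 0) =
      ennreal ((real q - 1) / real q) * (\<Sum>k. omega_mass 0 * ennreal (1 / real q ^ k) * mu (j + k) 0)" .
  have D: "(\<Sum>r. T j (Suc r)) = (\<Sum>r. ((\<Sum>i\<le>r. omega_mass i)
      + ennreal ((real q - 2) / (real q - 1)) * omega_mass (Suc r)) * mu j (Suc r))"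
    unfolding T_def sphere(4) ..
  show ?thesis unfolding e A B C D ..
qed

lemma mukr_eq_0_beyond_range:
  assumes range: "\<forall>x\<in>verts q. \<forall>y\<in>verts q. tdist x y > N \<longrightarrow> p x y = 0" and kr: "k + r > N"
  shows "mu k r = 0"
proof -
  have "p root x = 0" if "x \<in> Tkr q k r root" for x
    using that range root_mem_verts kr by (auto simp: Tkr_def tdist_def)
  then show ?thesis by (simp add: mukr_def)
qed

lemma omega_mass_finite_range:
  assumes range: "\<forall>x\<in>verts q. \<forall>y\<in>verts q. tdist x y > N \<longrightarrow> p x y = 0" and j: "j > N"
  shows "omega_mass j = (\<Sum>n\<in>{-int N..int N}. omega_mass (nat (int j + n)) * mu_tilde q p n)"
proof -
  note mu0 = mukr_eq_0_beyond_range[OF range]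
  have "omega_mass j = (\<Sum>k<j. \<Sum>r. omega_mass (j + r - k) * mu k r)"
    using omega_mass_equation[of j] j mu0 by simp
  also have "\<dots> = (\<Sum>n\<in>{-int N..int N}. omega_mass (nat (int j + n)) * mu_tilde q p n)"
    unfolding mu_tilde_def by (rule sum_by_difference[OF mu0 j]) simp
  finally show ?thesis .
qed

section \<open>Uniqueness\<close>

lemma invariant_measure_unique:
  assumes nu': "invariant_setting q p m nu'"
    and eq: "\<And>j. emeasure nu' (Omega q j root) = omega_mass j"
  shows "nu' = nu"
proof -
  interpret nu': invariant_setting q p m nu' by (rule nu')
  have omega_eq: "nu'.omega_mass = omega_mass" using eq by (simp add: fun_eq_iff nu'.omega_mass_def)
  define E where "E = insert {} {cyl q x | x. x \<in> verts q}"
  show ?thesis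
  proof (rule measure_eqI_generator_eq[of E "ends q" nu' nu "\<lambda>i. cyl q (root_anc i)"])
    show "Int_stable E" unfolding E_def by (rule Int_stable_cyl)
    show "E \<subseteq> Pow (ends q)" by (auto simp: E_def cyl_def)
    show "emeasure nu' X = emeasure nu X" if "X \<in> E" for X
      using that emeasure_cyl nu'.emeasure_cyl omega_eq by (auto simp: E_def)
    show "sets nu' = sigma_sets (ends q) E" "sets nu = sigma_sets (ends q) E"
      using nu'.radon radon borel_sets_end_top_eq[OF q_pos] by (simp_all add: radon_on_ends_def E_def)
    show "range (\<lambda>i. cyl q (root_anc i)) \<subseteq> E" using root_anc_in_verts[OF q_pos] unfolding E_def by blast
    show "(\<Union>i. cyl q (root_anc i)) = ends q"
    proof
      show "ends q \<subseteq> (\<Union>i. cyl q (root_anc i))"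
      proof
        fix xi assume xi: "xi \<in> ends q"
        obtain mm where mm: "\<forall>n<mm. xi n = 0" using ends_eventually_zero[OF xi] by blast
        have "xi \<in> cyl q (root_anc (nat (- mm)))"
          using xi mm root_anc_in_verts[OF q_pos, of "nat (- mm)"] by (auto simp: root_anc_def cyl_iff)
        then show "xi \<in> (\<Union>i. cyl q (root_anc i))" by blast
      qed
    qed (auto simp: cyl_def)
    show "emeasure nu' (cyl q (root_anc i)) \<noteq> \<infinity>" for i
      using nu'.cyl_finite root_anc_in_verts[OF q_pos] by simp
  qed
qed

end

theorem lemma4p3:
  fixes q :: nat and p :: "vtx \<Rightarrow> vtx \<Rightarrow> real"
    and m :: "(vtx \<Rightarrow> vtx) measure" and nu :: "bend measure"
  assumes q2: "q \<ge> 2"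
    and P: "transition_matrix q p" "irreducible_tm q p" "semi_isotropic q p"
    and haar: "is_left_haar q m"
    and radon: "radon_on_ends q nu"
    and inv: "mu_invariant q m p nu"
  defines "a \<equiv> (\<lambda>j. emeasure nu (Omega q j root))"
    and "mu \<equiv> mukr q p"
  shows
    "(\<forall>nu'. radon_on_ends q nu' \<and> mu_invariant q m p nu' \<and>
            (\<forall>j. emeasure nu' (Omega q j root) = a j) \<longrightarrow> nu' = nu)
   \<and> a 0 = (\<Sum>k. \<Sum>r. a (Suc r) * ennreal (1 / ((real q - 1) * real q ^ k)) * mu (Suc k) (Suc r))
          + (\<Sum>k. a 0 * ennreal (1 / real q ^ Suc k) * mu (Suc k) 0)
          + (\<Sum>r. (\<Sum>i\<le>r. a i) * mu 0 r)
   \<and> (\<forall>j\<ge>1. a j =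
            (\<Sum>k<j. \<Sum>r. a (j + r - k) * mu k r)
          + (\<Sum>k. \<Sum>r. a (Suc r) * ennreal (1 / real q ^ Suc k) * mu (j + 1 + k) (Suc r))
          + ennreal ((real q - 1) / real q) * (\<Sum>k. a 0 * ennreal (1 / real q ^ k) * mu (j + k) 0)
          + (\<Sum>r. ((\<Sum>i\<le>r. a i) + ennreal ((real q - 2) / (real q - 1)) * a (Suc r)) * mu j (Suc r)))
   \<and> ((\<forall>N::nat. (\<forall>x\<in>verts q. \<forall>y\<in>verts q. tdist x y > N \<longrightarrow> p x y = 0) \<longrightarrow>
         (\<forall>j>N. a j = (\<Sum>n\<in>{-int N..int N}. a (nat (int j + n)) * mu_tilde q p n))))"
proof -
  have setting: "invariant_setting q p m nu' \<longleftrightarrow> radon_on_ends q nu' \<and> mu_invariant q m p nu'" for nu'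
    using q2 P(1,3) haar by (simp add: invariant_setting_def)
  then interpret invariant_setting q p m nu using radon inv by blast
  have a: "a = omega_mass" by (simp add: a_def fun_eq_iff omega_mass_def)
  show ?thesis
    unfolding a mu_def
    using invariant_measure_unique setting omega_mass_0_equation omega_mass_equation
      omega_mass_finite_range
    by blast
qed

end
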